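(* Let $\alpha,\beta,\gamma,\eta>0$ and $\rho\in(0,1)$ with $\gamma\geq\alpha$, and consider the system $$S'=-\beta IS+\gamma(1-S-I-R)+\eta R,\qquad I'=\rho\beta IS-\alpha I+\beta I(1-S-I-R),\qquad R'=\alpha I-\eta R.$$ Let $\mathcal{R}_0:=\rho\beta/\alpha$, $\kappa:=1+\alpha/\eta$, $\rho^*:=\frac{-\alpha+\sqrt{\alpha\gamma\kappa}}{\gamma\kappa-\alpha}$ and $$\mathcal{R}_C:=\rho(2-\rho)-\rho^2\frac{\gamma\kappa}{\alpha}+2\frac{\rho(1-\rho)}{\alpha}\sqrt{\alpha\gamma\kappa}.$$ Suppose $0<\rho<\rho^*$. Then: (a) if $\mathcal{R}_0<\mathcal{R}_C$, there are no endemic equilibria; (b) if $\mathcal{R}_C\leq\mathcal{R}_0<1$, there are two endemic equilibria $\mathcal{E}_\pm$, which coincide if $\mathcal{R}_C=\mathcal{R}_0$; (c) if $1\leq\mathcal{R}_0$, there is a unique endemic equilibrium $\mathcal{E}_+$. Moreover, at $\mathcal{R}_0=1$ (with $\beta$ as bifurcation parameter) a transcritical bifurcation of backward type occurs, and a branch of unstable endemic equilibria $\mathcal{E}_-$ emerges from the disease-free equilibrium $\mathcal{E}_0=(1,0,0)$.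
   Context: An endemic equilibrium is an equilibrium $(S^*,I^*,R^* )$ of the system with $I^*>0$ (and $S^*,R^*\ge 0$). At any such equilibrium $R^*=\frac{\alpha}{\eta}I^*$, $S^*=\frac{\gamma(1-\kappa I^* )+\alpha I^*}{\beta I^*+\gamma}$, and $I^*$ is a positive root of $\beta\kappa x^2+(\alpha(2-\rho)+\rho\gamma\kappa-\beta)x+\gamma(\alpha/\beta-\rho)=0$; $\mathcal{E}_\pm$ denote the equilibria corresponding to the larger ($+$) and smaller ($-$) root $I^*_\pm=\frac{1}{2\beta\kappa}\big[\beta-\rho\gamma\kappa-\alpha(2-\rho)\pm\sqrt{\Delta}\big]$, $\Delta$ the discriminant. A backward transcritical bifurcation at $\mathcal{R}_0=1$ means that $\mathcal{E}_0$ changes from locally asymptotically stable to unstable as $\mathcal{R}_0$ crosses $1$ from below, and for $\mathcal{R}_0$ slightly below $1$ there is a branch of unstable endemic equilibria bifurcating from $\mathcal{E}_0$ at $\mathcal{R}_0=1$. *)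

theory Defs
  imports "HOL-Analysis.Analysis"
begin

definition sir_field :: "real \<Rightarrow> real \<Rightarrow> real \<Rightarrow> real \<Rightarrow> real \<Rightarrow> real \<times> real \<times> real \<Rightarrow> real \<times> real \<times> real" where
  "sir_field \<alpha> \<beta> \<gamma> \<eta> \<rho> x =
     (case x of (S, I, R) \<Rightarrow>
       (- \<beta> * I * S + \<gamma> * (1 - S - I - R) + \<eta> * R,
        \<rho> * \<beta> * I * S - \<alpha> * I + \<beta> * I * (1 - S - I - R),
        \<alpha> * I - \<eta> * R))"

definition is_equilibrium :: "('a::real_normed_vector \<Rightarrow> 'a) \<Rightarrow> 'a \<Rightarrow> bool" where
  "is_equilibrium f e \<longleftrightarrow> f e = 0"

definition endemic_equilibrium :: "real \<Rightarrow> real \<Rightarrow> real \<Rightarrow> real \<Rightarrow> real \<Rightarrow> real \<times> real \<times> real \<Rightarrow> bool" where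
  "endemic_equilibrium \<alpha> \<beta> \<gamma> \<eta> \<rho> x \<longleftrightarrow>
     is_equilibrium (sir_field \<alpha> \<beta> \<gamma> \<eta> \<rho>) x \<and>
     (case x of (S, I, R) \<Rightarrow> I > 0 \<and> S \<ge> 0 \<and> R \<ge> 0)"

definition R0 :: "real \<Rightarrow> real \<Rightarrow> real \<Rightarrow> real" where
  "R0 \<alpha> \<beta> \<rho> = \<rho> * \<beta> / \<alpha>"

definition kappa :: "real \<Rightarrow> real \<Rightarrow> real" where
  "kappa \<alpha> \<eta> = 1 + \<alpha> / \<eta>"

definition rho_star :: "real \<Rightarrow> real \<Rightarrow> real \<Rightarrow> real" where
  "rho_star \<alpha> \<gamma> \<eta> =
     (- \<alpha> + sqrt (\<alpha> * \<gamma> * kappa \<alpha> \<eta>)) / (\<gamma> * kappa \<alpha> \<eta> - \<alpha>)"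

definition RC :: "real \<Rightarrow> real \<Rightarrow> real \<Rightarrow> real \<Rightarrow> real" where
  "RC \<alpha> \<gamma> \<eta> \<rho> =
     \<rho> * (2 - \<rho>) - \<rho>^2 * (\<gamma> * kappa \<alpha> \<eta> / \<alpha>)
     + 2 * (\<rho> * (1 - \<rho>) / \<alpha>) * sqrt (\<alpha> * \<gamma> * kappa \<alpha> \<eta>)"

text \<open>Discriminant of beta*kappa x^2 + (alpha(2-rho) + rho gamma kappa - beta) x + gamma(alpha/beta - rho).\<close>
definition disc :: "real \<Rightarrow> real \<Rightarrow> real \<Rightarrow> real \<Rightarrow> real \<Rightarrow> real" where
  "disc \<alpha> \<beta> \<gamma> \<eta> \<rho> =
     (\<alpha> * (2 - \<rho>) + \<rho> * \<gamma> * kappa \<alpha> \<eta> - \<beta>)^2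
     - 4 * (\<beta> * kappa \<alpha> \<eta>) * (\<gamma> * (\<alpha> / \<beta> - \<rho>))"

definition I_plus :: "real \<Rightarrow> real \<Rightarrow> real \<Rightarrow> real \<Rightarrow> real \<Rightarrow> real" where
  "I_plus \<alpha> \<beta> \<gamma> \<eta> \<rho> =
     (\<beta> - \<rho> * \<gamma> * kappa \<alpha> \<eta> - \<alpha> * (2 - \<rho>) + sqrt (disc \<alpha> \<beta> \<gamma> \<eta> \<rho>))
     / (2 * \<beta> * kappa \<alpha> \<eta>)"

definition I_minus :: "real \<Rightarrow> real \<Rightarrow> real \<Rightarrow> real \<Rightarrow> real \<Rightarrow> real" where
  "I_minus \<alpha> \<beta> \<gamma> \<eta> \<rho> =
     (\<beta> - \<rho> * \<gamma> * kappa \<alpha> \<eta> - \<alpha> * (2 - \<rho>) - sqrt (disc \<alpha> \<beta> \<gamma> \<eta> \<rho>))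
     / (2 * \<beta> * kappa \<alpha> \<eta>)"

text \<open>The equilibrium point corresponding to a value I* of the infected compartment.\<close>
definition eq_point :: "real \<Rightarrow> real \<Rightarrow> real \<Rightarrow> real \<Rightarrow> real \<Rightarrow> real \<times> real \<times> real" where
  "eq_point \<alpha> \<beta> \<gamma> \<eta> Ist =
     ((\<gamma> * (1 - kappa \<alpha> \<eta> * Ist) + \<alpha> * Ist) / (\<beta> * Ist + \<gamma>), Ist, \<alpha> / \<eta> * Ist)"

definition E_plus :: "real \<Rightarrow> real \<Rightarrow> real \<Rightarrow> real \<Rightarrow> real \<Rightarrow> real \<times> real \<times> real" where
  "E_plus \<alpha> \<beta> \<gamma> \<eta> \<rho> = eq_point \<alpha> \<beta> \<gamma> \<eta> (I_plus \<alpha> \<beta> \<gamma> \<eta> \<rho>)"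

definition E_minus :: "real \<Rightarrow> real \<Rightarrow> real \<Rightarrow> real \<Rightarrow> real \<Rightarrow> real \<times> real \<times> real" where
  "E_minus \<alpha> \<beta> \<gamma> \<eta> \<rho> = eq_point \<alpha> \<beta> \<gamma> \<eta> (I_minus \<alpha> \<beta> \<gamma> \<eta> \<rho>)"

definition ode_solution_on :: "('a::real_normed_vector \<Rightarrow> 'a) \<Rightarrow> real \<Rightarrow> (real \<Rightarrow> 'a) \<Rightarrow> bool" where
  "ode_solution_on f T x \<longleftrightarrow>
     (\<forall>t\<in>{0..T}. (x has_vector_derivative f (x t)) (at t within {0..T}))"

definition ode_global_solution :: "('a::real_normed_vector \<Rightarrow> 'a) \<Rightarrow> (real \<Rightarrow> 'a) \<Rightarrow> bool" where
  "ode_global_solution f x \<longleftrightarrow>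
     (\<forall>t\<ge>0. (x has_vector_derivative f (x t)) (at t within {0..}))"

definition lyapunov_stable :: "('a::real_normed_vector \<Rightarrow> 'a) \<Rightarrow> 'a \<Rightarrow> bool" where
  "lyapunov_stable f e \<longleftrightarrow>
     (\<forall>\<epsilon>>0. \<exists>\<delta>>0. \<forall>x T. ode_solution_on f T x \<and> dist (x 0) e < \<delta> \<longrightarrow>
        (\<forall>t\<in>{0..T}. dist (x t) e < \<epsilon>))"

definition locally_attractive :: "('a::real_normed_vector \<Rightarrow> 'a) \<Rightarrow> 'a \<Rightarrow> bool" where
  "locally_attractive f e \<longleftrightarrow>
     (\<exists>\<delta>>0. \<forall>x. ode_global_solution f x \<and> dist (x 0) e < \<delta> \<longrightarrow> (x \<longlongrightarrow> e) at_top)"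

definition loc_asympt_stable :: "('a::real_normed_vector \<Rightarrow> 'a) \<Rightarrow> 'a \<Rightarrow> bool" where
  "loc_asympt_stable f e \<longleftrightarrow> is_equilibrium f e \<and> lyapunov_stable f e \<and> locally_attractive f e"

definition unstable :: "('a::real_normed_vector \<Rightarrow> 'a) \<Rightarrow> 'a \<Rightarrow> bool" where
  "unstable f e \<longleftrightarrow> is_equilibrium f e \<and> \<not> lyapunov_stable f e"

end

theory Submission
  imports Defs "HOL-Library.Quadratic_Discriminant"
begin

text \<open>Eliminating \<open>R\<^sup>* = \<alpha> I\<^sup>* / \<eta>\<close> and \<open>S\<^sup>*\<close> leaves the quadratic for \<open>I\<^sup>*\<close>. Its discriminant, as a
  quadratic in \<open>\<beta>\<close>, has the roots \<open>\<alpha> R\<^sub>C / \<rho>\<close> and a negative one, and \<open>\<rho> < \<rho>\<^sup>*\<close> makes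
  \<open>R\<^sub>C < 1\<close> and the linear coefficient negative beyond \<open>\<alpha> R\<^sub>C / \<rho>\<close>; the signs of the
  discriminant and of the constant term \<open>\<gamma> (\<alpha> / \<beta> - \<rho>)\<close> then count the positive roots.

  Stability is decided by Lyapunov and Chetaev functions. Since Lyapunov stability only
  constrains solutions that exist, instability needs an existence theorem: Picard iteration
  for globally Lipschitz fields, applied to the field truncated outside a ball. At \<open>\<E>\<^sub>0\<close> the
  function \<open>M I\<^sup>2 + (S + R - 1)\<^sup>2 + R\<^sup>2\<close> decays if \<open>\<rho> \<beta> < \<alpha>\<close>, and \<open>I\<^sup>2\<close> grows if \<open>\<rho> \<beta> > \<alpha>\<close>.
  At \<open>\<E>\<^sub>-\<close>, for \<open>\<beta>\<close> just below \<open>\<alpha> / \<rho>\<close>, \<open>M i\<^sup>2 - p\<^sup>2 - q\<^sup>2\<close> grows in suitable deviation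
  coordinates \<open>(p, i, q)\<close>: its derivative is a positive definite form, because for \<open>p = q = 0\<close>
  the per-capita infection rate grows with \<open>i\<close> (again by \<open>\<rho> < \<rho>\<^sup>*\<close>), plus terms that are
  cubic or vanish as \<open>\<E>\<^sub>-\<close> merges with \<open>\<E>\<^sub>0\<close>.\<close>

section \<open>Existence of solutions and Lyapunov-type criteria\<close>

lemma exp_weighted_integral_le:
  fixes K u :: real
  assumes "K > 0" "u \<ge> 0"
  shows "exp (- K * u) * integral {0..u} (\<lambda>s. exp (K * s)) \<le> 1 / K"
proof -
  have "((\<lambda>s. exp (K * s)) has_integral (exp (K * u) / K - exp (K * 0) / K)) {0..u}"
    using assms
    by (intro fundamental_theorem_of_calculus)
       (auto intro!: derivative_eq_intros simp: has_real_derivative_iff_has_vector_derivative[symmetric])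
  then have "exp (- K * u) * integral {0..u} (\<lambda>s. exp (K * s)) = (1 - exp (- K * u)) / K"
    using assms by (simp add: integral_unique field_simps exp_minus)
  then show ?thesis
    using assms by (simp add: divide_right_mono)
qed

lemma bielecki_integral_estimate:
  fixes f :: "'a::banach \<Rightarrow> 'a" and v w :: "real \<Rightarrow> 'a"
  assumes lip: "L-lipschitz_on UNIV f" and K: "K > 0" and u: "u \<ge> 0"
    and cont: "continuous_on {0..u} v" "continuous_on {0..u} w"
    and d: "\<And>s. s \<in> {0..u} \<Longrightarrow> dist (v s) (w s) \<le> d"
  shows "exp (- K * u) * norm (integral {0..u} (\<lambda>s. f (exp (K * s) *\<^sub>R v s))
           - integral {0..u} (\<lambda>s. f (exp (K * s) *\<^sub>R w s))) \<le> L * d / K"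
proof -
  have L: "L \<ge> 0" using lipschitz_on_nonneg[OF lip] .
  have f_cont: "continuous_on S f" for S
    using lipschitz_on_continuous_on[OF lipschitz_on_subset[OF lip]] by simp
  have int: "(\<lambda>s. f (exp (K * s) *\<^sub>R z s)) integrable_on {0..u}" if "continuous_on {0..u} z" for z
    by (intro integrable_continuous_interval continuous_on_compose2[OF f_cont]
        continuous_intros that) auto
  have bound: "norm (f (exp (K * s) *\<^sub>R v s) - f (exp (K * s) *\<^sub>R w s)) \<le> L * d * exp (K * s)"
    if s: "s \<in> {0..u}" for s
  proof -
    have "norm (f (exp (K * s) *\<^sub>R v s) - f (exp (K * s) *\<^sub>R w s))
        \<le> L * dist (exp (K * s) *\<^sub>R v s) (exp (K * s) *\<^sub>R w s)"
      using lipschitz_onD[OF lip] by (simp add: dist_norm)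
    also have "\<dots> = L * exp (K * s) * dist (v s) (w s)"
      by (simp add: dist_norm scaleR_diff_right[symmetric])
    also have "\<dots> \<le> L * exp (K * s) * d"
      using L d[OF s] by (intro mult_left_mono) auto
    finally show ?thesis by (simp add: algebra_simps)
  qed
  have "norm (integral {0..u} (\<lambda>s. f (exp (K * s) *\<^sub>R v s) - f (exp (K * s) *\<^sub>R w s)))
      \<le> integral {0..u} (\<lambda>s. L * d * exp (K * s))"
    using bound by (intro integral_norm_bound_integral integrable_diff int cont
        integrable_continuous_interval continuous_intros)
  then have "exp (- K * u) * norm (integral {0..u} (\<lambda>s. f (exp (K * s) *\<^sub>R v s))
           - integral {0..u} (\<lambda>s. f (exp (K * s) *\<^sub>R w s)))
      \<le> L * d * (exp (- K * u) * integral {0..u} (\<lambda>s. exp (K * s)))"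
    by (simp add: integral_diff[OF int[OF cont(1)] int[OF cont(2)]] mult_left_mono)
  also have "\<dots> \<le> L * d * (1 / K)"
  proof (rule mult_left_mono[OF exp_weighted_integral_le[OF K u]])
    show "0 \<le> L * d" using L d[of 0] u by (simp add: order_trans[OF zero_le_dist])
  qed
  finally show ?thesis by simp
qed

lemma ext_cont_in_bcontfun:
  fixes g :: "'a::euclidean_space \<Rightarrow> 'b::metric_space"
  assumes "continuous_on (cbox a b) g"
  shows "ext_cont g a b \<in> bcontfun"
proof -
  have "bounded (g ` cbox a b)"
    by (intro compact_imp_bounded compact_continuous_image assms compact_cbox)
  then show ?thesis
    unfolding bcontfun_def ext_cont_def using clamp_continuous_on[OF assms] clamp_bounded by blast
qed

text \<open>Picard-Lindeloef in Bielecki's form: in the variable \<open>v t = exp (- K t) x t\<close> with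
  \<open>K = 2 L + 1\<close> the integral operator is a contraction on bounded continuous functions.\<close>
lemma lipschitz_ode_solution_exists:
  fixes f :: "'a::banach \<Rightarrow> 'a"
  assumes lip: "L-lipschitz_on UNIV f" and T: "T \<ge> 0"
  shows "\<exists>x. x 0 = x0 \<and> ode_solution_on f T x"
proof -
  have L: "L \<ge> 0" using lipschitz_on_nonneg[OF lip] .
  define K where "K = 2 * L + 1"
  have K: "K > 0" using L by (simp add: K_def)
  have f_cont: "continuous_on S f" for S
    using lipschitz_on_continuous_on[OF lipschitz_on_subset[OF lip]] by simp
  define P where "P v u = x0 + integral {0..u} (\<lambda>s. f (exp (K * s) *\<^sub>R apply_bcontfun v s))" for v u
  have P_deriv: "(P v has_vector_derivative f (exp (K * u) *\<^sub>R v u)) (at u within {0..T})"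
    if "u \<in> {0..T}" for v u
  proof -
    have "continuous_on {0..T} (\<lambda>s. f (exp (K * s) *\<^sub>R apply_bcontfun v s))"
      by (intro continuous_on_compose2[OF f_cont] continuous_intros) auto
    from integral_has_vector_derivative[OF this that] show ?thesis
      unfolding P_def by (intro derivative_eq_intros) auto
  qed
  have "continuous_on {0..T} (P v)" for v
    using P_deriv by (meson continuous_on_eq_continuous_within has_vector_derivative_continuous)
  then have G_cont: "continuous_on (cbox 0 T) (\<lambda>u. exp (- K * u) *\<^sub>R P v u)" for v
    by (auto intro!: continuous_intros)
  define \<Phi> where "\<Phi> v = Bcontfun (ext_cont (\<lambda>u. exp (- K * u) *\<^sub>R P v u) 0 T)" for v
  have \<Phi>_apply: "apply_bcontfun (\<Phi> v) t = exp (- K * u) *\<^sub>R P v u"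
    if "u = clamp 0 T t" for v t u
    using ext_cont_in_bcontfun[OF G_cont] by (simp add: \<Phi>_def Bcontfun_inverse ext_cont_def that)
  have clamp_in: "clamp 0 T t \<in> {0..T}" for t
    using clamp_in_interval[of 0 T t] T by simp
  have contraction: "dist (\<Phi> v) (\<Phi> w) \<le> 1/2 * dist v w" for v w
  proof (rule dist_bound)
    fix t
    define u where "u = clamp 0 T t"
    have u: "u \<in> {0..T}" using clamp_in by (simp add: u_def)
    have "dist (\<Phi> v t) (\<Phi> w t) = exp (- K * u) * norm (P v u - P w u)"
      by (simp add: \<Phi>_apply[OF u_def] dist_norm scaleR_diff_right[symmetric])
    also have "\<dots> \<le> L * dist v w / K"
      unfolding P_def
      by (rule order_trans[OF eq_refl bielecki_integral_estimate[OF lip K]])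
        (use u in \<open>auto intro: dist_bounded\<close>)
    also have "\<dots> \<le> 1/2 * dist v w"
      using L by (simp add: K_def field_simps mult_left_mono)
    finally show "dist (\<Phi> v t) (\<Phi> w t) \<le> 1/2 * dist v w" .
  qed
  obtain v where v: "\<Phi> v = v"
    using banach_fix_type[of "1/2" \<Phi>] contraction by auto
  define x where "x t = exp (K * t) *\<^sub>R apply_bcontfun v t" for t
  have x_eq: "x t = P v t" if "t \<in> {0..T}" for t
  proof -
    have "clamp 0 T t = t" using clamp_cancel_cbox[of t 0 T] that by simp
    then show ?thesis using \<Phi>_apply[where v=v and t=t and u=t] by (simp add: v x_def flip: exp_add)
  qed
  show ?thesis
  proof (intro exI conjI)
    show "x 0 = x0" using x_eq[of 0] T by (simp add: P_def)
    show "ode_solution_on f T x"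
      unfolding ode_solution_on_def
    proof
      fix t assume t: "t \<in> {0..T}"
      show "(x has_vector_derivative f (x t)) (at t within {0..T})"
        using has_vector_derivative_transform[OF t x_eq P_deriv[OF t]] unfolding x_def by simp
    qed
  qed
qed

lemma ode_solution_on_continuous:
  "ode_solution_on f T x \<Longrightarrow> continuous_on {0..T} x"
  unfolding ode_solution_on_def
  by (meson continuous_on_eq_continuous_within has_vector_derivative_continuous)

lemma ode_solution_on_subset:
  assumes "ode_solution_on f T x" "T' \<le> T"
  shows "ode_solution_on f T' x"
  using assms unfolding ode_solution_on_def
  by (meson atLeastAtMost_iff atLeastatMost_subset_iff has_vector_derivative_within_subset
      order_refl order_trans)

lemma ode_global_solution_imp_solution_on:
  "ode_global_solution f x \<Longrightarrow> ode_solution_on f T x"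
  unfolding ode_global_solution_def ode_solution_on_def
  by (metis atLeastAtMost_iff atLeast_iff has_vector_derivative_within_subset subsetI)

lemma continuous_on_less_barrier:
  fixes g :: "real \<Rightarrow> real"
  assumes cont: "continuous_on {0..T} g" and g0: "g 0 < c"
    and step: "\<And>t. t \<in> {0..T} \<Longrightarrow> (\<forall>s\<in>{0..t}. g s \<le> c) \<Longrightarrow> g t < c"
  shows "\<forall>t\<in>{0..T}. g t < c"
proof (rule ccontr)
  define A where "A = {t \<in> {0..T}. c \<le> g t}"
  assume "\<not> (\<forall>t\<in>{0..T}. g t < c)"
  then have "A \<noteq> {}" by (auto simp: A_def not_less)
  moreover have "closed A"
    unfolding A_def by (rule continuous_on_closed_Collect_le[OF continuous_on_const cont]) auto
  moreover have bdd: "bdd_below A"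
    unfolding A_def by (auto intro: bdd_belowI[of _ 0])
  ultimately have "Inf A \<in> A"
    by (intro closed_contains_Inf)
  then have t1: "Inf A \<in> {0..T}" "c \<le> g (Inf A)"
    by (auto simp: A_def)
  have below: "g t < c" if "t \<in> {0..<Inf A}" for t
    using that t1 cInf_lower[OF _ bdd, of t] by (force simp: A_def)
  have "\<forall>s\<in>{0..Inf A}. g s \<le> c"
  proof (cases "Inf A = 0")
    case True
    then show ?thesis using g0 by auto
  next
    case False
    have "closed {t \<in> {0..Inf A}. g t \<le> c}"
      using t1 by (intro continuous_on_closed_Collect_le continuous_on_subset[OF cont]
          continuous_on_const) auto
    moreover have "{0..<Inf A} \<subseteq> {t \<in> {0..Inf A}. g t \<le> c}"
      using below by fastforce
    ultimately have "closure {0..<Inf A} \<subseteq> {t \<in> {0..Inf A}. g t \<le> c}"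
      by (rule closure_minimal[rotated])
    then show ?thesis
      using False t1 by auto
  qed
  then show False
    using step[OF t1(1)] t1(2) by auto
qed

text \<open>The field truncated by the nearest-point retraction onto the closed ball is globally
  Lipschitz, so it has solutions on every \<open>[0, T]\<close>; stability keeps them in the open ball,
  where the truncated field agrees with \<open>f\<close>.\<close>
lemma lyapunov_stable_imp_solutions_exist:
  fixes f :: "'a::euclidean_space \<Rightarrow> 'a"
  assumes stable: "lyapunov_stable f e" and \<epsilon>: "\<epsilon> > 0"
    and lip: "L-lipschitz_on (cball e \<epsilon>) f"
  obtains \<delta> where "\<delta> > 0"
    "\<And>x0 T. dist x0 e < \<delta> \<Longrightarrow> T \<ge> 0 \<Longrightarrow>
       \<exists>x. x 0 = x0 \<and> ode_solution_on f T x \<and> (\<forall>t\<in>{0..T}. dist (x t) e < \<epsilon>)"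
proof -
  obtain \<delta> where \<delta>: "\<delta> > 0" and close: "\<And>x T. ode_solution_on f T x \<Longrightarrow> dist (x 0) e < \<delta> \<Longrightarrow>
      \<forall>t\<in>{0..T}. dist (x t) e < \<epsilon>"
    using stable \<epsilon> unfolding lyapunov_stable_def by meson
  define r where "r = closest_point (cball e \<epsilon>)"
  have r_in: "r y \<in> cball e \<epsilon>" and r_id: "y \<in> cball e \<epsilon> \<Longrightarrow> r y = y" for y
  proof -
    show "r y \<in> cball e \<epsilon>"
      unfolding r_def using \<epsilon> by (intro closest_point_in_set) auto
    show "y \<in> cball e \<epsilon> \<Longrightarrow> r y = y"
      unfolding r_def by (rule closest_point_self)
  qed
  have "1-lipschitz_on UNIV r"
    using \<epsilon> by (auto intro!: lipschitz_onI closest_point_lipschitz simp: r_def)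
  then have "(L * 1)-lipschitz_on UNIV (f \<circ> r)"
    by (rule lipschitz_on_compose) (use lipschitz_on_subset[OF lip] r_in in blast)
  then have lip_g: "L-lipschitz_on UNIV (\<lambda>y. f (r y))"
    by (simp add: o_def)
  have "\<exists>x. x 0 = x0 \<and> ode_solution_on f T x \<and> (\<forall>t\<in>{0..T}. dist (x t) e < \<epsilon>)"
    if x0: "dist x0 e < min \<delta> \<epsilon>" and T: "T \<ge> 0" for x0 T
  proof -
    obtain x where x0e: "x 0 = x0" and sol: "ode_solution_on (\<lambda>y. f (r y)) T x"
      using lipschitz_ode_solution_exists[OF lip_g T] by blast
    have solves_f: "ode_solution_on f t x"
      if "t \<in> {0..T}" "\<forall>s\<in>{0..t}. dist (x s) e \<le> \<epsilon>" for t
      using ode_solution_on_subset[OF sol, of t] that r_id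
      unfolding ode_solution_on_def by (auto simp: dist_commute)
    have "\<forall>t\<in>{0..T}. dist (x t) e < \<epsilon>"
    proof (rule continuous_on_less_barrier)
      show "continuous_on {0..T} (\<lambda>t. dist (x t) e)"
        by (intro continuous_intros ode_solution_on_continuous[OF sol])
      show "dist (x 0) e < \<epsilon>"
        using x0 x0e by simp
      fix t assume "t \<in> {0..T}" "\<forall>s\<in>{0..t}. dist (x s) e \<le> \<epsilon>"
      then show "dist (x t) e < \<epsilon>"
        using close[OF solves_f] x0 x0e by auto
    qed
    with solves_f[of T] T x0e show ?thesis
      by (auto intro: order_less_imp_le)
  qed
  with \<delta> \<epsilon> show ?thesis using that[of "min \<delta> \<epsilon>"] by auto
qed

lemma ode_solution_exp_growth:
  fixes W :: "'a::real_normed_vector \<Rightarrow> real"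
  assumes T: "T \<ge> 0" and sol: "ode_solution_on f T x"
    and W_deriv: "\<And>y. (W has_derivative DW y) (at y)"
    and growth: "\<And>t. t \<in> {0..T} \<Longrightarrow> c * W (x t) \<le> DW (x t) (f (x t))"
  shows "exp (c * T) * W (x 0) \<le> W (x T)"
proof -
  define h where "h t = exp (- c * t) * W (x t)" for t
  have h_deriv: "(h has_real_derivative exp (- c * t) * (DW (x t) (f (x t)) - c * W (x t)))
      (at t within {0..T})" if t: "t \<in> {0..T}" for t
  proof -
    have "((W \<circ> x) has_vector_derivative DW (x t) (f (x t))) (at t within {0..T})"
      using sol t unfolding ode_solution_on_def
      by (intro vector_derivative_diff_chain_within has_derivative_subset[OF W_deriv]) auto
    then show ?thesis
      unfolding h_def has_real_derivative_iff_has_vector_derivative[symmetric] o_def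
      by (auto intro!: derivative_eq_intros simp: algebra_simps)
  qed
  have "h 0 \<le> h T"
  proof (rule DERIV_nonneg_imp_increasing_open[OF T])
    fix t assume t: "0 < t" "t < T"
    then have "(h has_real_derivative exp (- c * t) * (DW (x t) (f (x t)) - c * W (x t))) (at t)"
      using h_deriv[of t] by (simp add: at_within_Icc_at)
    then show "\<exists>y. (h has_real_derivative y) (at t) \<and> 0 \<le> y"
      using growth[of t] t by auto
  next
    show "continuous_on {0..T} h"
      using h_deriv by (meson DERIV_continuous continuous_on_eq_continuous_within)
  qed
  then have "exp (c * T) * W (x 0) \<le> exp (c * T) * (exp (- c * T) * W (x T))"
    by (simp add: h_def)
  also have "\<dots> = W (x T)"
    by (simp flip: exp_add)
  finally show ?thesis .
qed

lemma chetaev_unstable: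
  fixes f :: "'a::euclidean_space \<Rightarrow> 'a" and W :: "'a \<Rightarrow> real"
  assumes eq: "f e = 0" and \<epsilon>: "\<epsilon> > 0" and lip: "L-lipschitz_on (cball e \<epsilon>) f"
    and W_deriv: "\<And>y. (W has_derivative DW y) (at y)" and c: "c > 0"
    and growth: "\<And>y. y \<in> cball e \<epsilon> \<Longrightarrow> c * W y \<le> DW y (f y)"
    and bounded: "\<And>y. y \<in> cball e \<epsilon> \<Longrightarrow> W y \<le> B"
    and positive_near: "\<And>\<delta>. \<delta> > 0 \<Longrightarrow> \<exists>y. dist y e < \<delta> \<and> W y > 0"
  shows "unstable f e"
  unfolding unstable_def is_equilibrium_def
proof (intro conjI notI eq)
  assume "lyapunov_stable f e"
  then obtain \<delta> where \<delta>: "\<delta> > 0" and solutions: "\<And>x0 T. dist x0 e < \<delta> \<Longrightarrow> T \<ge> 0 \<Longrightarrow>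
      \<exists>x. x 0 = x0 \<and> ode_solution_on f T x \<and> (\<forall>t\<in>{0..T}. dist (x t) e < \<epsilon>)"
    using lyapunov_stable_imp_solutions_exist[OF _ \<epsilon> lip] by blast
  obtain y where y: "dist y e < \<delta>" "W y > 0"
    using positive_near[OF \<delta>] by blast
  define T where "T = max 0 (B / W y / c)"
  have T: "T \<ge> 0" by (simp add: T_def)
  obtain x where x: "x 0 = y" "ode_solution_on f T x" "\<forall>t\<in>{0..T}. dist (x t) e < \<epsilon>"
    using solutions[OF y(1) T] by blast
  have in_ball: "x t \<in> cball e \<epsilon>" if "t \<in> {0..T}" for t
    using x(3) that by (auto simp: dist_commute less_imp_le)
  have "B / W y = c * (B / W y / c)"
    using c by simp
  also have "\<dots> \<le> c * T"
    using c by (intro mult_left_mono) (auto simp: T_def)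
  also have "\<dots> < exp (c * T)"
    using exp_ge_add_one_self[of "c * T"] by linarith
  finally have "B < exp (c * T) * W (x 0)"
    using y(2) x(1) by (simp add: field_simps)
  also have "\<dots> \<le> W (x T)"
    using ode_solution_exp_growth[OF T x(2) W_deriv growth[OF in_ball]] .
  also have "\<dots> \<le> B"
    using bounded[OF in_ball] T by simp
  finally show False by simp
qed

locale quadratic_lyapunov_function =
  fixes f :: "'a::real_normed_vector \<Rightarrow> 'a" and e :: 'a and r :: real
    and V :: "'a \<Rightarrow> real" and DV :: "'a \<Rightarrow> 'a \<Rightarrow> real" and c m M :: real
  assumes r_pos: "r > 0" and c_pos: "c > 0" and m_pos: "m > 0" and M_pos: "M > 0"
    and V_deriv: "\<And>y. (V has_derivative DV y) (at y)"
    and decrease: "\<And>y. y \<in> cball e r \<Longrightarrow> DV y (f y) \<le> - c * V y"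
    and lower: "\<And>y. y \<in> cball e r \<Longrightarrow> m * (dist y e)\<^sup>2 \<le> V y"
    and upper: "\<And>y. y \<in> cball e r \<Longrightarrow> V y \<le> M * (dist y e)\<^sup>2"
begin

lemma decay:
  assumes "ode_solution_on f T x" "T \<ge> 0" "\<And>t. t \<in> {0..T} \<Longrightarrow> x t \<in> cball e r"
  shows "V (x T) \<le> exp (- c * T) * V (x 0)"
proof -
  have "exp (- c * T) * - V (x 0) \<le> - V (x T)"
  proof (rule ode_solution_exp_growth[OF assms(2,1)])
    show "((\<lambda>y. - V y) has_derivative (\<lambda>h. - DV y h)) (at y)" for y
      by (intro derivative_intros V_deriv)
    show "- c * - V (x t) \<le> - DV (x t) (f (x t))" if "t \<in> {0..T}" for t
      using decrease[OF assms(3)[OF that]] by simp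
  qed
  then show ?thesis by simp
qed

lemma confinement:
  assumes \<epsilon>: "0 < \<epsilon>" "\<epsilon> \<le> r"
  obtains \<delta> where "\<delta> > 0"
    "\<And>x T t. ode_solution_on f T x \<Longrightarrow> dist (x 0) e < \<delta> \<Longrightarrow> t \<in> {0..T} \<Longrightarrow>
       dist (x t) e < \<epsilon> \<and> V (x t) \<le> exp (- c * t) * V (x 0)"
proof -
  define q where "q = min 1 (sqrt (m / M))"
  have q: "q > 0" "q \<le> 1" "q\<^sup>2 \<le> m / M"
    using m_pos M_pos by (auto simp: q_def min_def)
  define \<delta> where "\<delta> = \<epsilon> * q / 2"
  have \<delta>: "\<delta> > 0" "\<delta> < \<epsilon>"
    using q \<epsilon> by (auto simp: \<delta>_def)
  have "M * \<delta>\<^sup>2 = M * q\<^sup>2 * \<epsilon>\<^sup>2 / 4"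
    by (simp add: \<delta>_def power_mult_distrib power_divide)
  also have "\<dots> \<le> m * \<epsilon>\<^sup>2 / 4"
    using q M_pos mult_left_mono[OF q(3), of M] by (intro divide_right_mono mult_right_mono) auto
  also have "\<dots> < m * \<epsilon>\<^sup>2"
    using m_pos \<epsilon> by simp
  finally have M\<delta>: "M * \<delta>\<^sup>2 < m * \<epsilon>\<^sup>2" .
  have "dist (x t) e < \<epsilon> \<and> V (x t) \<le> exp (- c * t) * V (x 0)"
    if sol: "ode_solution_on f T x" and x0: "dist (x 0) e < \<delta>" and t: "t \<in> {0..T}" for x T t
  proof -
    have x0_ball: "x 0 \<in> cball e r"
      using x0 \<delta> \<epsilon> by (simp add: dist_commute)
    have "V (x 0) \<le> M * \<delta>\<^sup>2"
      using upper[OF x0_ball] M_pos x0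
      by (smt (verit) mult_left_mono power_mono zero_le_dist)
    then have V0: "V (x 0) < m * \<epsilon>\<^sup>2"
      using M\<delta> by linarith
    have V0_nonneg: "V (x 0) \<ge> 0"
      using lower[OF x0_ball] m_pos by (smt (verit) zero_le_power2 mult_nonneg_nonneg)
    have decay_until: "V (x s) \<le> exp (- c * s) * V (x 0)"
      if "s \<in> {0..T}" "\<forall>u\<in>{0..s}. dist (x u) e \<le> \<epsilon>" for s
      using that by (intro decay ode_solution_on_subset[OF sol])
        (auto simp: dist_commute intro: order_trans[OF _ \<epsilon>(2)])
    have stay: "\<forall>s\<in>{0..T}. dist (x s) e < \<epsilon>"
    proof (rule continuous_on_less_barrier)
      show "continuous_on {0..T} (\<lambda>s. dist (x s) e)"
        by (intro continuous_intros ode_solution_on_continuous[OF sol])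
      show "dist (x 0) e < \<epsilon>"
        using x0 \<delta> by simp
      fix s assume s: "s \<in> {0..T}" and near: "\<forall>u\<in>{0..s}. dist (x u) e \<le> \<epsilon>"
      have "dist (x s) e \<le> \<epsilon>"
        using near s by auto
      then have "m * (dist (x s) e)\<^sup>2 \<le> V (x s)"
        using lower[of "x s"] \<epsilon> by (simp add: dist_commute)
      also have "\<dots> \<le> exp (- c * s) * V (x 0)"
        using decay_until[OF s near] .
      also have "\<dots> \<le> V (x 0)"
        using V0_nonneg s c_pos by (simp add: mult_left_le_one_le)
      also have "\<dots> < m * \<epsilon>\<^sup>2"
        by (rule V0)
      finally have "(dist (x s) e)\<^sup>2 < \<epsilon>\<^sup>2"
        using m_pos by simp
      then show "dist (x s) e < \<epsilon>"
        using \<epsilon> by (smt (verit) power_mono zero_le_dist)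
    qed
    moreover have "\<forall>u\<in>{0..t}. dist (x u) e \<le> \<epsilon>"
      using stay t by (auto intro: less_imp_le)
    ultimately show ?thesis
      using t decay_until[OF t] by auto
  qed
  with \<delta> that show ?thesis by blast
qed

lemma loc_asympt_stable:
  assumes "f e = 0"
  shows "loc_asympt_stable f e"
  unfolding loc_asympt_stable_def is_equilibrium_def
proof (intro conjI assms)
  show "lyapunov_stable f e"
    unfolding lyapunov_stable_def
  proof (intro allI impI)
    fix \<epsilon> :: real assume "\<epsilon> > 0"
    then obtain \<delta> where "\<delta> > 0" "\<And>x T t. ode_solution_on f T x \<Longrightarrow> dist (x 0) e < \<delta> \<Longrightarrow>
        t \<in> {0..T} \<Longrightarrow> dist (x t) e < min \<epsilon> r"
      using confinement[of "min \<epsilon> r"] r_pos by (metis min.cobounded2 min_less_iff_conj)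
    then show "\<exists>\<delta>>0. \<forall>x T. ode_solution_on f T x \<and> dist (x 0) e < \<delta> \<longrightarrow>
        (\<forall>t\<in>{0..T}. dist (x t) e < \<epsilon>)"
      by (metis min_less_iff_conj)
  qed
  obtain \<delta> where \<delta>: "\<delta> > 0" and confined: "\<And>x T t. ode_solution_on f T x \<Longrightarrow>
      dist (x 0) e < \<delta> \<Longrightarrow> t \<in> {0..T} \<Longrightarrow> dist (x t) e < r \<and> V (x t) \<le> exp (- c * t) * V (x 0)"
    using confinement[of r] r_pos by blast
  show "locally_attractive f e"
    unfolding locally_attractive_def
  proof (intro exI[of _ \<delta>] conjI allI impI \<delta>)
    fix x assume x: "ode_global_solution f x \<and> dist (x 0) e < \<delta>"
    have bound: "dist (x t) e < r \<and> V (x t) \<le> exp (- c * t) * V (x 0)" if "t \<ge> 0" for t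
      using confined[where x=x and T=t and t=t] ode_global_solution_imp_solution_on[of f x t] x that by auto
    show "(x \<longlongrightarrow> e) at_top"
      unfolding tendsto_iff
    proof (intro allI impI)
      fix \<epsilon> :: real assume \<epsilon>: "\<epsilon> > 0"
      have "\<forall>\<^sub>F t in at_top. exp (- c * t) * V (x 0) < m * \<epsilon>\<^sup>2"
        using c_pos m_pos \<epsilon>
        by (intro order_tendstoD(2)[OF tendsto_mult_left_zero]
            filterlim_compose[OF exp_at_bot] filterlim_tendsto_neg_mult_at_bot
            tendsto_const filterlim_ident) auto
      moreover have "\<forall>\<^sub>F t in at_top. (t::real) \<ge> 0"
        by (rule eventually_ge_at_top)
      ultimately show "\<forall>\<^sub>F t in at_top. dist (x t) e < \<epsilon>"
      proof eventually_elim
        case (elim t)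
        have "m * (dist (x t) e)\<^sup>2 \<le> V (x t)"
          using lower[of "x t"] bound[OF elim(2)] by (simp add: dist_commute)
        also have "\<dots> < m * \<epsilon>\<^sup>2"
          using bound[OF elim(2)] elim(1) by linarith
        finally have "(dist (x t) e)\<^sup>2 < \<epsilon>\<^sup>2"
          using m_pos by simp
        then show ?case
          using \<epsilon> by (smt (verit) power_mono zero_le_dist)
      qed
    qed
  qed
qed

end

section \<open>The disease-free equilibrium\<close>

lemma sir_field_apply [simp]:
  "sir_field \<alpha> \<beta> \<gamma> \<eta> \<rho> (S, I, R) =
     (- \<beta> * I * S + \<gamma> * (1 - S - I - R) + \<eta> * R,
      \<rho> * \<beta> * I * S - \<alpha> * I + \<beta> * I * (1 - S - I - R),
      \<alpha> * I - \<eta> * R)"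
  by (simp add: sir_field_def)

lemma abs_diff_le_dist_triple:
  fixes a b c a' b' c' :: real
  shows "\<bar>a - a'\<bar> \<le> dist (a, b, c) (a', b', c')" "\<bar>b - b'\<bar> \<le> dist (a, b, c) (a', b', c')"
    "\<bar>c - c'\<bar> \<le> dist (a, b, c) (a', b', c')"
  using dist_fst_le[of "(a, b, c)" "(a', b', c')"] dist_snd_le[of "(a, b, c)" "(a', b', c')"]
    dist_fst_le[of "(b, c)" "(b', c')"] dist_snd_le[of "(b, c)" "(b', c')"]
  by (simp_all add: dist_real_def)

lemma abs_diff_le_dist_cball:
  fixes S I R S' I' R' r :: real
  assumes "(S, I, R) \<in> cball (S', I', R') r"
  shows "\<bar>S - S'\<bar> \<le> r" "\<bar>I - I'\<bar> \<le> r" "\<bar>R - R'\<bar> \<le> r"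
  using assms abs_diff_le_dist_triple[where a=S and b=I and c=R and a'=S' and b'=I' and c'=R']
  by (auto simp: dist_commute)

lemma dist_triple_squared:
  fixes a b c a' b' c' :: real
  shows "(dist (a, b, c) (a', b', c'))\<^sup>2 = (a - a')\<^sup>2 + (b - b')\<^sup>2 + (c - c')\<^sup>2"
  by (simp add: dist_Pair_Pair dist_real_def add.assoc)

lemma lipschitz_on_mult_bounded:
  fixes f g :: "'a::metric_space \<Rightarrow> real"
  assumes f: "L-lipschitz_on U f" and g: "M-lipschitz_on U g" and B: "B \<ge> 0"
    and f_bound: "\<And>x. x \<in> U \<Longrightarrow> \<bar>f x\<bar> \<le> B" and g_bound: "\<And>x. x \<in> U \<Longrightarrow> \<bar>g x\<bar> \<le> B"
  shows "(B * (L + M))-lipschitz_on U (\<lambda>x. f x * g x)"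
proof (rule lipschitz_onI)
  show "0 \<le> B * (L + M)"
    using B lipschitz_on_nonneg[OF f] lipschitz_on_nonneg[OF g] by simp
  fix x y assume xy: "x \<in> U" "y \<in> U"
  have "\<bar>f x * g x - f y * g y\<bar> = \<bar>(f x - f y) * g x + f y * (g x - g y)\<bar>"
    by (simp add: algebra_simps)
  also have "\<dots> \<le> \<bar>f x - f y\<bar> * B + B * \<bar>g x - g y\<bar>"
    using xy f_bound g_bound
    by (intro order_trans[OF abs_triangle_ineq] add_mono)
      (auto simp: abs_mult intro: mult_left_mono mult_right_mono)
  also have "\<dots> \<le> L * dist x y * B + B * (M * dist x y)"
    using xy lipschitz_onD[OF f] lipschitz_onD[OF g] B
    by (intro add_mono mult_right_mono mult_left_mono) (auto simp: dist_real_def)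
  finally show "dist (f x * g x) (f y * g y) \<le> B * (L + M) * dist x y"
    by (simp add: dist_real_def algebra_simps)
qed

lemma sir_field_lipschitz_on_cball:
  obtains L where "L-lipschitz_on (cball e r) (sir_field \<alpha> \<beta> \<gamma> \<eta> \<rho>)"
proof -
  let ?U = "cball e r"
  define B where "B = norm e + \<bar>r\<bar>"
  have norm_le: "norm y \<le> B" if "y \<in> ?U" for y
    using that norm_triangle_ineq2[of y e] by (auto simp: B_def dist_norm norm_minus_commute)
  have bounds: "\<bar>fst y\<bar> \<le> B" "\<bar>fst (snd y)\<bar> \<le> B" "\<bar>snd (snd y)\<bar> \<le> B" if "y \<in> ?U" for y
  proof -
    obtain a b c where y: "y = (a, b, c)" by (cases y) auto
    show "\<bar>fst y\<bar> \<le> B" "\<bar>fst (snd y)\<bar> \<le> B" "\<bar>snd (snd y)\<bar> \<le> B"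
      using norm_le[OF that] norm_fst_le[of a "(b, c)"] norm_snd_le[of "(b, c)" a]
        norm_fst_le[of b c] norm_snd_le[of c b] by (auto simp: y)
  qed
  have S: "1-lipschitz_on ?U fst"
    by (intro lipschitz_onI) (simp_all add: dist_fst_le)
  have I: "1-lipschitz_on ?U (\<lambda>y. fst (snd y))"
    by (intro lipschitz_onI) (simp_all add: order_trans[OF dist_fst_le dist_snd_le])
  have R: "1-lipschitz_on ?U (\<lambda>y. snd (snd y))"
    by (intro lipschitz_onI) (simp_all add: order_trans[OF dist_snd_le dist_snd_le])
  have B: "B \<ge> 0" by (simp add: B_def)
  note prod = lipschitz_on_mult_bounded[OF _ _ B]
  have "sir_field \<alpha> \<beta> \<gamma> \<eta> \<rho> = (\<lambda>y.
     (- \<beta> * (fst (snd y) * fst y) + \<gamma> * (1 - fst y - fst (snd y) - snd (snd y)) + \<eta> * snd (snd y),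
      \<rho> * \<beta> * (fst (snd y) * fst y) - \<alpha> * fst (snd y) + \<beta> * fst (snd y)
        - \<beta> * (fst (snd y) * fst y) - \<beta> * (fst (snd y) * fst (snd y)) - \<beta> * (fst (snd y) * snd (snd y)),
      \<alpha> * fst (snd y) - \<eta> * snd (snd y)))"
    by (auto simp: sir_field_def algebra_simps)
  moreover have "\<exists>L. L-lipschitz_on ?U \<dots>"
    by (rule exI, (rule lipschitz_intros prod S I R | rule bounds, assumption)+)
  ultimately show ?thesis
    using that by auto
qed

lemma two_mult_le_weighted_squares:
  fixes k a b :: real
  assumes "k > 0"
  shows "2 * a * b \<le> k * a\<^sup>2 + b\<^sup>2 / k"
proof -
  have "0 \<le> (k * a - b)\<^sup>2 / k"
    using assms by simp
  also have "\<dots> = k * a\<^sup>2 - 2 * a * b + b\<^sup>2 / k"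
    using assms by (simp add: power2_eq_square field_simps)
  finally show ?thesis by simp
qed

lemma infection_rate_near_dfe:
  fixes \<alpha> \<beta> \<rho> S I R r :: real
  assumes "\<beta> > 0" "0 < \<rho>" "\<rho> < 1" and "\<bar>S - 1\<bar> \<le> r" "\<bar>I\<bar> \<le> r" "\<bar>R\<bar> \<le> r"
  shows "\<bar>\<rho> * \<beta> * S - \<alpha> + \<beta> * (1 - S - I - R) - (\<rho> * \<beta> - \<alpha>)\<bar> \<le> 3 * \<beta> * r"
proof -
  have "\<bar>\<rho> * \<beta> * S - \<alpha> + \<beta> * (1 - S - I - R) - (\<rho> * \<beta> - \<alpha>)\<bar>
      = \<bar>(1 - \<rho>) * \<beta> * (S - 1) + \<beta> * I + \<beta> * R\<bar>"
    by (simp add: algebra_simps abs_minus_commute)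
  also have "\<dots> \<le> (1 - \<rho>) * \<beta> * \<bar>S - 1\<bar> + \<beta> * \<bar>I\<bar> + \<beta> * \<bar>R\<bar>"
    using assms by (auto intro!: order_trans[OF abs_triangle_ineq] add_mono simp: abs_mult)
  also have "\<dots> \<le> 1 * \<beta> * r + \<beta> * r + \<beta> * r"
    using assms by (intro add_mono mult_mono mult_left_mono) auto
  finally show ?thesis by simp
qed

text \<open>The derivative of \<open>M I\<^sup>2 + u\<^sup>2 + R\<^sup>2\<close> along the field near \<open>\<E>\<^sub>0\<close>.\<close>
lemma dfe_lyapunov_decrease:
  fixes \<alpha> \<beta> \<gamma> \<eta> \<rho> \<mu> M H S I R :: real
  assumes pos: "\<beta> > 0" "\<gamma> > 0" "\<eta> > 0" "0 < \<rho>" "\<rho> < 1"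
    and \<mu>: "\<mu> = \<alpha> - \<rho> * \<beta>" "\<mu> > 0"
    and near: "\<bar>S - 1\<bar> \<le> \<mu> / (6 * \<beta>)" "\<bar>I\<bar> \<le> \<mu> / (6 * \<beta>)" "\<bar>R\<bar> \<le> \<mu> / (6 * \<beta>)"
    and H: "\<bar>\<alpha> - \<gamma> - \<beta> * S\<bar> \<le> H" and M: "H\<^sup>2 / \<gamma> + \<alpha>\<^sup>2 / \<eta> \<le> M * \<mu> / 2"
  defines "u \<equiv> S + R - 1"
  shows "2 * M * I * (\<rho> * \<beta> * I * S - \<alpha> * I + \<beta> * I * (1 - S - I - R))
         + 2 * u * ((- \<beta> * I * S + \<gamma> * (1 - S - I - R) + \<eta> * R) + (\<alpha> * I - \<eta> * R))
         + 2 * R * (\<alpha> * I - \<eta> * R)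
       \<le> - min (\<mu> / 2) (min \<gamma> \<eta>) * (M * I\<^sup>2 + u\<^sup>2 + R\<^sup>2)"
proof -
  define g where "g = \<rho> * \<beta> * S - \<alpha> + \<beta> * (1 - S - I - R)"
  define c where "c = min (\<mu> / 2) (min \<gamma> \<eta>)"
  have "\<bar>g + \<mu>\<bar> \<le> \<mu> / 2"
    using infection_rate_near_dfe[OF pos(1,4,5) near, of \<alpha>] pos \<mu> by (simp add: g_def)
  then have g: "g \<le> - \<mu> / 2" by linarith
  have "0 \<le> H\<^sup>2 / \<gamma> + \<alpha>\<^sup>2 / \<eta>"
    using pos by simp
  then have "0 \<le> M * \<mu>"
    using M by linarith
  then have M_nonneg: "M \<ge> 0"
    using \<mu> by (simp add: zero_le_mult_iff)
  have infected: "2 * M * I * (\<rho> * \<beta> * I * S - \<alpha> * I + \<beta> * I * (1 - S - I - R)) \<le> - M * \<mu> * I\<^sup>2"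
  proof -
    have "2 * M * I * (\<rho> * \<beta> * I * S - \<alpha> * I + \<beta> * I * (1 - S - I - R)) = 2 * M * I\<^sup>2 * g"
      by (simp add: g_def power2_eq_square algebra_simps)
    also have "\<dots> \<le> 2 * M * I\<^sup>2 * (- \<mu> / 2)"
      using g M_nonneg by (intro mult_left_mono) auto
    finally show ?thesis by (simp add: ac_simps)
  qed
  have "2 * u * (I * (\<alpha> - \<gamma> - \<beta> * S)) \<le> 2 * \<bar>u\<bar> * (\<bar>I\<bar> * \<bar>\<alpha> - \<gamma> - \<beta> * S\<bar>)"
    using abs_ge_self[of "u * (I * (\<alpha> - \<gamma> - \<beta> * S))"] by (simp add: abs_mult)
  also have "\<dots> \<le> 2 * \<bar>u\<bar> * (\<bar>I\<bar> * H)"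
    using H by (intro mult_left_mono) auto
  also have "\<dots> \<le> \<gamma> * u\<^sup>2 + H\<^sup>2 / \<gamma> * I\<^sup>2"
    using two_mult_le_weighted_squares[OF pos(2), of "\<bar>u\<bar>" "\<bar>I\<bar> * H"]
    by (simp add: power_mult_distrib ac_simps)
  finally have susceptible: "2 * u * (I * (\<alpha> - \<gamma> - \<beta> * S)) \<le> \<gamma> * u\<^sup>2 + H\<^sup>2 / \<gamma> * I\<^sup>2" .
  have recovered: "2 * R * (\<alpha> * I) \<le> \<eta> * R\<^sup>2 + \<alpha>\<^sup>2 / \<eta> * I\<^sup>2"
    using two_mult_le_weighted_squares[OF pos(3), of R "\<alpha> * I"] by (simp add: power_mult_distrib)
  have "2 * M * I * (\<rho> * \<beta> * I * S - \<alpha> * I + \<beta> * I * (1 - S - I - R))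
         + 2 * u * ((- \<beta> * I * S + \<gamma> * (1 - S - I - R) + \<eta> * R) + (\<alpha> * I - \<eta> * R))
         + 2 * R * (\<alpha> * I - \<eta> * R)
      = 2 * M * I * (\<rho> * \<beta> * I * S - \<alpha> * I + \<beta> * I * (1 - S - I - R))
         + 2 * u * (I * (\<alpha> - \<gamma> - \<beta> * S)) + 2 * R * (\<alpha> * I) - 2 * \<gamma> * u\<^sup>2 - 2 * \<eta> * R\<^sup>2"
    by (simp add: u_def power2_eq_square algebra_simps)
  also have "\<dots> \<le> - M * \<mu> * I\<^sup>2 + (\<gamma> * u\<^sup>2 + H\<^sup>2 / \<gamma> * I\<^sup>2) + (\<eta> * R\<^sup>2 + \<alpha>\<^sup>2 / \<eta> * I\<^sup>2)
      - 2 * \<gamma> * u\<^sup>2 - 2 * \<eta> * R\<^sup>2"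
    using infected susceptible recovered by linarith
  also have "\<dots> = (- M * \<mu> + H\<^sup>2 / \<gamma> + \<alpha>\<^sup>2 / \<eta>) * I\<^sup>2 - \<gamma> * u\<^sup>2 - \<eta> * R\<^sup>2"
    by (simp add: algebra_simps)
  also have "\<dots> \<le> - (M * \<mu> / 2) * I\<^sup>2 - \<gamma> * u\<^sup>2 - \<eta> * R\<^sup>2"
  proof -
    have "- M * \<mu> + H\<^sup>2 / \<gamma> + \<alpha>\<^sup>2 / \<eta> \<le> - (M * \<mu> / 2)"
      using M by linarith
    then show ?thesis
      by (intro diff_mono mult_right_mono order_refl) auto
  qed
  also have "\<dots> \<le> - c * (M * I\<^sup>2 + u\<^sup>2 + R\<^sup>2)"
  proof -
    have c: "c \<le> \<mu> / 2" "c \<le> \<gamma>" "c \<le> \<eta>"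
      by (simp_all add: c_def)
    have "c * (M * I\<^sup>2) \<le> \<mu> / 2 * (M * I\<^sup>2)"
      using c M_nonneg by (intro mult_right_mono) auto
    moreover have "c * u\<^sup>2 \<le> \<gamma> * u\<^sup>2" "c * R\<^sup>2 \<le> \<eta> * R\<^sup>2"
      using c by (auto intro!: mult_right_mono)
    moreover have "- c * (M * I\<^sup>2 + u\<^sup>2 + R\<^sup>2) = - (c * (M * I\<^sup>2)) - c * u\<^sup>2 - c * R\<^sup>2"
      "- (M * \<mu> / 2) * I\<^sup>2 = - (\<mu> / 2 * (M * I\<^sup>2))"
      by (simp_all add: algebra_simps)
    ultimately show ?thesis
      by linarith
  qed
  finally show ?thesis
    by (simp add: c_def)
qed

lemma dfe_lyapunov_quadratic_bounds:
  fixes M S I R :: real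
  assumes "M > 0"
  defines "d\<^sub>2 \<equiv> (S - 1)\<^sup>2 + I\<^sup>2 + R\<^sup>2" and "V \<equiv> M * I\<^sup>2 + (S + R - 1)\<^sup>2 + R\<^sup>2"
  shows "min (1/3) M * d\<^sub>2 \<le> V" "V \<le> (M + 3) * d\<^sub>2"
proof -
  have S: "(S - 1)\<^sup>2 \<le> 2 * (S + R - 1)\<^sup>2 + 2 * R\<^sup>2"
    using zero_le_power2[of "S - 1 + 2 * R"] by (simp add: power2_eq_square algebra_simps)
  have u: "(S + R - 1)\<^sup>2 \<le> 2 * (S - 1)\<^sup>2 + 2 * R\<^sup>2"
    using zero_le_power2[of "S - 1 - R"] by (simp add: power2_eq_square algebra_simps)
  have "d\<^sub>2 \<le> 3 * (S + R - 1)\<^sup>2 + 3 * R\<^sup>2 + I\<^sup>2"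
    unfolding d\<^sub>2_def using S zero_le_power2[of "S + R - 1"] by linarith
  then have "min (1/3) M * d\<^sub>2 \<le> min (1/3) M * (3 * (S + R - 1)\<^sup>2 + 3 * R\<^sup>2 + I\<^sup>2)"
    using assms(1) by (intro mult_left_mono) auto
  also have "\<dots> = min (1/3) M * (3 * (S + R - 1)\<^sup>2) + min (1/3) M * (3 * R\<^sup>2) + min (1/3) M * I\<^sup>2"
    by (simp add: algebra_simps)
  also have "\<dots> \<le> (1/3) * (3 * (S + R - 1)\<^sup>2) + (1/3) * (3 * R\<^sup>2) + M * I\<^sup>2"
    by (intro add_mono mult_right_mono) auto
  finally show "min (1/3) M * d\<^sub>2 \<le> V"
    by (simp add: V_def)
  have "(M + 3) * d\<^sub>2 = M * I\<^sup>2 + M * (S - 1)\<^sup>2 + M * R\<^sup>2 + 3 * (S - 1)\<^sup>2 + 3 * I\<^sup>2 + 3 * R\<^sup>2"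
    by (simp add: d\<^sub>2_def algebra_simps)
  moreover have "0 \<le> M * (S - 1)\<^sup>2" "0 \<le> M * R\<^sup>2"
    using assms(1) by simp_all
  ultimately show "V \<le> (M + 3) * d\<^sub>2"
    using u zero_le_power2[of I] zero_le_power2[of "S - 1"] unfolding V_def by linarith
qed

lemma dfe_loc_asympt_stable:
  fixes \<alpha> \<beta> \<gamma> \<eta> \<rho> :: real
  assumes pos: "\<alpha> > 0" "\<beta> > 0" "\<gamma> > 0" "\<eta> > 0" "0 < \<rho>" "\<rho> < 1"
    and subthreshold: "\<rho> * \<beta> < \<alpha>"
  shows "loc_asympt_stable (sir_field \<alpha> \<beta> \<gamma> \<eta> \<rho>) (1, 0, 0)"
proof -
  define \<mu> where "\<mu> = \<alpha> - \<rho> * \<beta>"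
  have \<mu>: "\<mu> > 0" using subthreshold by (simp add: \<mu>_def)
  define r where "r = \<mu> / (6 * \<beta>)"
  define H where "H = \<bar>\<alpha> - \<gamma> - \<beta>\<bar> + \<beta> * r"
  define M where "M = 2 * (H\<^sup>2 / \<gamma> + \<alpha>\<^sup>2 / \<eta>) / \<mu> + 1"
  have "H\<^sup>2 / \<gamma> + \<alpha>\<^sup>2 / \<eta> \<ge> 0"
    using pos by simp
  then have M: "H\<^sup>2 / \<gamma> + \<alpha>\<^sup>2 / \<eta> \<le> M * \<mu> / 2" "M > 0"
    using \<mu> unfolding M_def by (auto simp: field_simps intro!: add_nonneg_pos)
  define V where "V y = M * (fst (snd y))\<^sup>2 + (fst y + snd (snd y) - 1)\<^sup>2 + (snd (snd y))\<^sup>2"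
    for y :: "real \<times> real \<times> real"
  define DV where "DV y h = 2 * M * fst (snd y) * fst (snd h)
      + 2 * (fst y + snd (snd y) - 1) * (fst h + snd (snd h)) + 2 * snd (snd y) * snd (snd h)"
    for y h :: "real \<times> real \<times> real"
  have "quadratic_lyapunov_function (sir_field \<alpha> \<beta> \<gamma> \<eta> \<rho>) (1, 0, 0) r V DV
      (min (\<mu> / 2) (min \<gamma> \<eta>)) (min (1/3) M) (M + 3)"
  proof unfold_locales
    show "r > 0" "min (\<mu> / 2) (min \<gamma> \<eta>) > 0" "min (1/3) M > 0" "M + 3 > 0"
      using \<mu> pos M by (auto simp: r_def)
    show "(V has_derivative DV y) (at y)" for y
      unfolding V_def DV_def by (auto intro!: derivative_eq_intros simp: algebra_simps)
  next
    fix y :: "real \<times> real \<times> real" assume y: "y \<in> cball (1, 0, 0) r"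
    obtain S I R where y_eq: "y = (S, I, R)" by (cases y) auto
    note near = abs_diff_le_dist_cball[OF y[unfolded y_eq]]
    have "\<bar>\<alpha> - \<gamma> - \<beta> * S\<bar> \<le> \<bar>\<alpha> - \<gamma> - \<beta>\<bar> + \<bar>\<beta> * (S - 1)\<bar>"
      using abs_triangle_ineq4[of "\<alpha> - \<gamma> - \<beta>" "\<beta> * (S - 1)"] by (simp add: algebra_simps)
    also have "\<dots> \<le> H"
      using near(1) pos by (simp add: H_def abs_mult)
    finally have "\<bar>\<alpha> - \<gamma> - \<beta> * S\<bar> \<le> H" .
    from dfe_lyapunov_decrease[OF pos(2-6) \<mu>_def \<mu> near[unfolded r_def] this M(1)]
    show "DV y (sir_field \<alpha> \<beta> \<gamma> \<eta> \<rho> y) \<le> - min (\<mu> / 2) (min \<gamma> \<eta>) * V y"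
      by (simp add: y_eq V_def DV_def)
  next
    fix y :: "real \<times> real \<times> real"
    obtain S I R where y_eq: "y = (S, I, R)" by (cases y) auto
    show "min (1/3) M * (dist y (1, 0, 0))\<^sup>2 \<le> V y" "V y \<le> (M + 3) * (dist y (1, 0, 0))\<^sup>2"
      using dfe_lyapunov_quadratic_bounds[OF M(2), where S=S and I=I and R=R]
      by (simp_all add: y_eq V_def dist_triple_squared)
  qed
  then show ?thesis
    by (rule quadratic_lyapunov_function.loc_asympt_stable) (simp add: zero_prod_def)
qed

lemma dfe_unstable:
  fixes \<alpha> \<beta> \<gamma> \<eta> \<rho> :: real
  assumes pos: "\<beta> > 0" "0 < \<rho>" "\<rho> < 1" and superthreshold: "\<rho> * \<beta> > \<alpha>"
  shows "unstable (sir_field \<alpha> \<beta> \<gamma> \<eta> \<rho>) (1, 0, 0)"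
proof -
  define \<mu> where "\<mu> = \<rho> * \<beta> - \<alpha>"
  have \<mu>: "\<mu> > 0" using superthreshold by (simp add: \<mu>_def)
  define r where "r = \<mu> / (6 * \<beta>)"
  have r: "r > 0" using \<mu> pos by (simp add: r_def)
  obtain L where lip: "L-lipschitz_on (cball (1, 0, 0) r) (sir_field \<alpha> \<beta> \<gamma> \<eta> \<rho>)"
    by (rule sir_field_lipschitz_on_cball)
  define W where "W y = (fst (snd y))\<^sup>2" for y :: "real \<times> real \<times> real"
  define DW where "DW y h = 2 * fst (snd y) * fst (snd h)" for y h :: "real \<times> real \<times> real"
  show ?thesis
  proof (rule chetaev_unstable[OF _ r lip, of W DW \<mu> "r\<^sup>2"])
    show "sir_field \<alpha> \<beta> \<gamma> \<eta> \<rho> (1, 0, 0) = 0"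
      by (simp add: zero_prod_def)
    show "(W has_derivative DW y) (at y)" for y
      unfolding W_def DW_def by (auto intro!: derivative_eq_intros)
    show "\<mu> > 0" by (fact \<mu>)
  next
    fix y :: "real \<times> real \<times> real" assume y: "y \<in> cball (1, 0, 0) r"
    obtain S I R where y_eq: "y = (S, I, R)" by (cases y) auto
    note near = abs_diff_le_dist_cball[OF y[unfolded y_eq]]
    define g where "g = \<rho> * \<beta> * S - \<alpha> + \<beta> * (1 - S - I - R)"
    have "\<bar>g - \<mu>\<bar> \<le> \<mu> / 2"
      using infection_rate_near_dfe[OF pos near] pos by (simp add: g_def \<mu>_def r_def)
    then have "\<mu> / 2 \<le> g"
      by linarith
    then have "2 * I\<^sup>2 * (\<mu> / 2) \<le> 2 * I\<^sup>2 * g"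
      by (intro mult_left_mono) auto
    then show "\<mu> * W y \<le> DW y (sir_field \<alpha> \<beta> \<gamma> \<eta> \<rho> y)"
      by (simp add: W_def DW_def y_eq g_def power2_eq_square algebra_simps)
    show "W y \<le> r\<^sup>2"
      using near(2) by (simp add: W_def y_eq abs_le_square_iff[symmetric] power_mono)
  next
    fix \<delta> :: real assume "\<delta> > 0"
    then show "\<exists>y. dist y (1, 0, 0) < \<delta> \<and> W y > 0"
      by (intro exI[of _ "(1, \<delta> / 2, 0)"]) (simp add: W_def dist_Pair_Pair dist_real_def)
  qed
qed

section \<open>Endemic equilibria\<close>

lemma kappa_gt_one: "\<alpha> > 0 \<Longrightarrow> \<eta> > 0 \<Longrightarrow> kappa \<alpha> \<eta> > 1"
  by (simp add: kappa_def)

lemma susceptible_balance_imp_quadratic: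
  fixes \<alpha> \<beta> \<gamma> \<rho> k S I :: real
  assumes "\<beta> \<noteq> 0" and S: "S * (\<beta> * I + \<gamma>) = \<gamma> * (1 - k * I) + \<alpha> * I"
  shows "(\<beta> * I + \<gamma>) * (\<rho> * \<beta> * S - \<alpha> + \<beta> * (1 - S - k * I))
    = - \<beta> * (\<beta> * k * I\<^sup>2 + (\<alpha> * (2 - \<rho>) + \<rho> * \<gamma> * k - \<beta>) * I + \<gamma> * (\<alpha> / \<beta> - \<rho>))"
proof -
  have "(\<beta> * I + \<gamma>) * (\<rho> * \<beta> * S - \<alpha> + \<beta> * (1 - S - k * I))
      = (\<rho> - 1) * \<beta> * (S * (\<beta> * I + \<gamma>)) - \<alpha> * (\<beta> * I + \<gamma>) + \<beta> * (1 - k * I) * (\<beta> * I + \<gamma>)"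
    by (simp add: algebra_simps)
  also have "\<dots> = (\<rho> - 1) * \<beta> * (\<gamma> * (1 - k * I) + \<alpha> * I) - \<alpha> * (\<beta> * I + \<gamma>)
      + \<beta> * (1 - k * I) * (\<beta> * I + \<gamma>)"
    by (simp only: S)
  also have "\<dots> = - \<beta> * (\<beta> * k * I\<^sup>2 + (\<alpha> * (2 - \<rho>) + \<rho> * \<gamma> * k - \<beta>) * I + \<gamma> * (\<alpha> / \<beta> - \<rho>))"
    using assms(1) by (simp add: field_simps power2_eq_square)
  finally show ?thesis .
qed

lemma sir_field_eq_zero_iff:
  fixes \<alpha> \<beta> \<gamma> \<eta> \<rho> S I :: real
  assumes "\<alpha> > 0" "\<eta> > 0" "I > 0"
  shows "sir_field \<alpha> \<beta> \<gamma> \<eta> \<rho> (S, I, \<alpha> / \<eta> * I) = 0 \<longleftrightarrow>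
    S * (\<beta> * I + \<gamma>) = \<gamma> * (1 - kappa \<alpha> \<eta> * I) + \<alpha> * I
    \<and> \<rho> * \<beta> * S - \<alpha> + \<beta> * (1 - S - kappa \<alpha> \<eta> * I) = 0"
proof -
  have components:
    "- \<beta> * I * S + \<gamma> * (1 - S - I - \<alpha> / \<eta> * I) + \<eta> * (\<alpha> / \<eta> * I)
       = (\<gamma> * (1 - kappa \<alpha> \<eta> * I) + \<alpha> * I) - S * (\<beta> * I + \<gamma>)"
    "\<rho> * \<beta> * I * S - \<alpha> * I + \<beta> * I * (1 - S - I - \<alpha> / \<eta> * I)
       = I * (\<rho> * \<beta> * S - \<alpha> + \<beta> * (1 - S - kappa \<alpha> \<eta> * I))"
    "\<alpha> * I - \<eta> * (\<alpha> / \<eta> * I) = 0"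
    using assms by (simp_all add: kappa_def field_simps)
  show ?thesis
    using assms(3) by (simp only: sir_field_apply zero_prod_def prod.inject components) auto
qed

lemma endemic_susceptible_pos:
  fixes \<alpha> \<beta> \<gamma> \<rho> k S I :: real
  assumes pos: "\<alpha> > 0" "\<beta> > 0" "\<gamma> > 0" "0 < \<rho>" "I > 0"
    and S: "S * (\<beta> * I + \<gamma>) = \<gamma> * (1 - k * I) + \<alpha> * I"
    and infection: "\<rho> * \<beta> * S - \<alpha> + \<beta> * (1 - S - k * I) = 0"
  shows "S > 0"
proof -
  have "\<beta> * (S * (\<beta> * I + \<rho> * \<gamma>)) = \<alpha> * (\<beta> * I + \<gamma>)"
    using S infection by algebra
  moreover have "\<alpha> * (\<beta> * I + \<gamma>) > 0" "\<beta> * I + \<rho> * \<gamma> > 0"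
    using pos by (simp_all add: add_pos_pos)
  ultimately have "0 < \<beta> * (S * (\<beta> * I + \<rho> * \<gamma>))"
    by simp
  then show ?thesis
    using pos \<open>\<beta> * I + \<rho> * \<gamma> > 0\<close> by (simp add: zero_less_mult_iff)
qed

lemma endemic_equilibrium_iff:
  fixes \<alpha> \<beta> \<gamma> \<eta> \<rho> :: real
  assumes pos: "\<alpha> > 0" "\<beta> > 0" "\<gamma> > 0" "\<eta> > 0" "0 < \<rho>"
  shows "endemic_equilibrium \<alpha> \<beta> \<gamma> \<eta> \<rho> x \<longleftrightarrow>
    (\<exists>I>0. \<beta> * kappa \<alpha> \<eta> * I\<^sup>2 + (\<alpha> * (2 - \<rho>) + \<rho> * \<gamma> * kappa \<alpha> \<eta> - \<beta>) * I
            + \<gamma> * (\<alpha> / \<beta> - \<rho>) = 0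
         \<and> x = eq_point \<alpha> \<beta> \<gamma> \<eta> I)"
    (is "_ \<longleftrightarrow> (\<exists>I>0. ?P I = 0 \<and> _)")
proof -
  define k where "k = kappa \<alpha> \<eta>"
  have den: "\<beta> * I + \<gamma> > 0" if "I > 0" for I
    using pos that by (simp add: add_pos_pos)
  have infection_iff: "\<rho> * \<beta> * S - \<alpha> + \<beta> * (1 - S - k * I) = 0 \<longleftrightarrow> ?P I = 0"
    if I: "I > 0" and S: "S * (\<beta> * I + \<gamma>) = \<gamma> * (1 - k * I) + \<alpha> * I" for S I
    using susceptible_balance_imp_quadratic[OF _ S, of \<rho>] den[OF I] pos by (auto simp: k_def)
  note eq_iff = sir_field_eq_zero_iff[OF pos(1,4), folded k_def]
  show ?thesis
  proof
    assume "endemic_equilibrium \<alpha> \<beta> \<gamma> \<eta> \<rho> x"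
    then obtain S I R where x: "x = (S, I, R)" and I: "I > 0"
      and eq: "sir_field \<alpha> \<beta> \<gamma> \<eta> \<rho> (S, I, R) = 0"
      by (cases x) (auto simp: endemic_equilibrium_def is_equilibrium_def)
    have R: "R = \<alpha> / \<eta> * I"
      using eq pos by (simp add: zero_prod_def field_simps)
    with eq eq_iff[OF I] infection_iff[OF I]
    have "S * (\<beta> * I + \<gamma>) = \<gamma> * (1 - k * I) + \<alpha> * I" "?P I = 0"
      by auto
    moreover from this(1) have "S = (\<gamma> * (1 - k * I) + \<alpha> * I) / (\<beta> * I + \<gamma>)"
      using den[OF I] by (simp add: field_simps)
    ultimately show "\<exists>I>0. ?P I = 0 \<and> x = eq_point \<alpha> \<beta> \<gamma> \<eta> I"
      using I by (auto simp: x R eq_point_def k_def)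
  next
    assume "\<exists>I>0. ?P I = 0 \<and> x = eq_point \<alpha> \<beta> \<gamma> \<eta> I"
    then obtain I where I: "I > 0" and P: "?P I = 0" and x: "x = eq_point \<alpha> \<beta> \<gamma> \<eta> I"
      by blast
    define S where "S = (\<gamma> * (1 - k * I) + \<alpha> * I) / (\<beta> * I + \<gamma>)"
    have S: "S * (\<beta> * I + \<gamma>) = \<gamma> * (1 - k * I) + \<alpha> * I"
      using den[OF I] by (simp add: S_def)
    with P infection_iff[OF I] have infection: "\<rho> * \<beta> * S - \<alpha> + \<beta> * (1 - S - k * I) = 0"
      by blast
    have "x = (S, I, \<alpha> / \<eta> * I)"
      by (simp add: x eq_point_def S_def k_def)
    then show "endemic_equilibrium \<alpha> \<beta> \<gamma> \<eta> \<rho> x"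
      using eq_iff[OF I] S infection I endemic_susceptible_pos[OF pos(1-3,5) I S infection] pos
      by (simp add: endemic_equilibrium_def is_equilibrium_def)
  qed
qed

lemma equilibrium_quadratic_iff_roots:
  fixes \<alpha> \<beta> \<gamma> \<eta> \<rho> I :: real
  assumes "\<alpha> > 0" "\<beta> > 0" "\<eta> > 0"
  shows "\<beta> * kappa \<alpha> \<eta> * I\<^sup>2 + (\<alpha> * (2 - \<rho>) + \<rho> * \<gamma> * kappa \<alpha> \<eta> - \<beta>) * I
           + \<gamma> * (\<alpha> / \<beta> - \<rho>) = 0
    \<longleftrightarrow> disc \<alpha> \<beta> \<gamma> \<eta> \<rho> \<ge> 0 \<and> (I = I_plus \<alpha> \<beta> \<gamma> \<eta> \<rho> \<or> I = I_minus \<alpha> \<beta> \<gamma> \<eta> \<rho>)"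
proof -
  define a where "a = \<beta> * kappa \<alpha> \<eta>"
  define b where "b = \<alpha> * (2 - \<rho>) + \<rho> * \<gamma> * kappa \<alpha> \<eta> - \<beta>"
  define c where "c = \<gamma> * (\<alpha> / \<beta> - \<rho>)"
  have a: "a \<noteq> 0"
    using assms kappa_gt_one[of \<alpha> \<eta>] by (simp add: a_def)
  have d: "discrim a b c = disc \<alpha> \<beta> \<gamma> \<eta> \<rho>"
    by (simp add: discrim_def disc_def a_def b_def c_def)
  have roots: "I_plus \<alpha> \<beta> \<gamma> \<eta> \<rho> = (- b + sqrt (discrim a b c)) / (2 * a)"
    "I_minus \<alpha> \<beta> \<gamma> \<eta> \<rho> = (- b - sqrt (discrim a b c)) / (2 * a)"
    unfolding d by (simp_all add: I_plus_def I_minus_def a_def b_def mult.assoc)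
  have "a * I\<^sup>2 + b * I + c = 0
      \<longleftrightarrow> disc \<alpha> \<beta> \<gamma> \<eta> \<rho> \<ge> 0 \<and> (I = I_plus \<alpha> \<beta> \<gamma> \<eta> \<rho> \<or> I = I_minus \<alpha> \<beta> \<gamma> \<eta> \<rho>)"
    unfolding roots d[symmetric] by (rule discriminant_iff[OF a])
  then show ?thesis
    by (simp only: a_def b_def c_def)
qed

lemma endemic_equilibria_eq:
  fixes \<alpha> \<beta> \<gamma> \<eta> \<rho> :: real
  assumes "\<alpha> > 0" "\<beta> > 0" "\<gamma> > 0" "\<eta> > 0" "0 < \<rho>"
  shows "{x. endemic_equilibrium \<alpha> \<beta> \<gamma> \<eta> \<rho> x} = eq_point \<alpha> \<beta> \<gamma> \<eta> `
    {I. I > 0 \<and> disc \<alpha> \<beta> \<gamma> \<eta> \<rho> \<ge> 0 \<and> (I = I_plus \<alpha> \<beta> \<gamma> \<eta> \<rho> \<or> I = I_minus \<alpha> \<beta> \<gamma> \<eta> \<rho>)}"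
  using endemic_equilibrium_iff[OF assms] equilibrium_quadratic_iff_roots[OF assms(1,2,4)]
  by blast

lemma kappa_sqrt_squared:
  "\<alpha> > 0 \<Longrightarrow> \<gamma> > 0 \<Longrightarrow> \<eta> > 0 \<Longrightarrow> (sqrt (\<alpha> * \<gamma> * kappa \<alpha> \<eta>))\<^sup>2 = \<alpha> * \<gamma> * kappa \<alpha> \<eta>"
  using kappa_gt_one[of \<alpha> \<eta>] by simp

lemma sqrt_alpha_gamma_kappa_gt:
  fixes \<alpha> \<gamma> \<eta> :: real
  assumes "\<alpha> > 0" "\<gamma> \<ge> \<alpha>" "\<eta> > 0"
  shows "sqrt (\<alpha> * \<gamma> * kappa \<alpha> \<eta>) > \<alpha>"
proof -
  have "\<gamma> * kappa \<alpha> \<eta> > \<alpha>"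
    using assms kappa_gt_one[of \<alpha> \<eta>] mult_strict_left_mono[of 1 "kappa \<alpha> \<eta>" \<gamma>] by linarith
  then have "\<alpha> * \<gamma> * kappa \<alpha> \<eta> > \<alpha>\<^sup>2"
    using assms by (simp add: mult.assoc power2_eq_square)
  then show ?thesis
    using assms(1) real_less_rsqrt by blast
qed

lemma rho_star_eq:
  fixes \<alpha> \<gamma> \<eta> :: real
  assumes "\<alpha> > 0" "\<gamma> \<ge> \<alpha>" "\<eta> > 0"
  shows "rho_star \<alpha> \<gamma> \<eta> = \<alpha> / (\<alpha> + sqrt (\<alpha> * \<gamma> * kappa \<alpha> \<eta>))"
proof -
  define q where "q = sqrt (\<alpha> * \<gamma> * kappa \<alpha> \<eta>)"
  have q2: "q\<^sup>2 = \<alpha> * \<gamma> * kappa \<alpha> \<eta>"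
    using assms kappa_sqrt_squared[of \<alpha> \<gamma> \<eta>] by (simp add: q_def)
  have "q > \<alpha>"
    using sqrt_alpha_gamma_kappa_gt[OF assms] by (simp add: q_def)
  have "\<gamma> * kappa \<alpha> \<eta> - \<alpha> = (q - \<alpha>) * (q + \<alpha>) / \<alpha>"
    using q2 assms(1) by (simp add: field_simps power2_eq_square)
  then have "rho_star \<alpha> \<gamma> \<eta> = (q - \<alpha>) / ((q - \<alpha>) * (q + \<alpha>) / \<alpha>)"
    by (simp add: rho_star_def q_def[symmetric])
  also have "\<dots> = \<alpha> / (\<alpha> + q)"
  proof -
    have "q - \<alpha> \<noteq> 0" "q + \<alpha> \<noteq> 0"
      using \<open>q > \<alpha>\<close> assms(1) by auto
    then show ?thesis
      using assms(1) by (simp add: divide_simps)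
  qed
  finally show ?thesis
    by (simp add: q_def)
qed

lemma RC_eq:
  fixes \<alpha> \<gamma> \<eta> \<rho> :: real
  assumes "\<alpha> > 0" "\<gamma> > 0" "\<eta> > 0"
  shows "RC \<alpha> \<gamma> \<eta> \<rho> = 1 - ((\<alpha> * (1 - \<rho>) - \<rho> * sqrt (\<alpha> * \<gamma> * kappa \<alpha> \<eta>)) / \<alpha>)\<^sup>2"
proof -
  define q where "q = sqrt (\<alpha> * \<gamma> * kappa \<alpha> \<eta>)"
  have "\<gamma> * kappa \<alpha> \<eta> = q\<^sup>2 / \<alpha>"
    using assms kappa_sqrt_squared[of \<alpha> \<gamma> \<eta>] by (simp add: q_def)
  then show ?thesis
    using assms(1) by (simp add: RC_def q_def[symmetric] field_simps power2_eq_square)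
qed

lemma disc_factorization:
  fixes \<alpha> \<beta> \<gamma> \<eta> \<rho> :: real
  assumes "\<alpha> > 0" "\<beta> > 0" "\<gamma> > 0" "\<eta> > 0"
  defines "k \<equiv> kappa \<alpha> \<eta>" and "q \<equiv> sqrt (\<alpha> * \<gamma> * kappa \<alpha> \<eta>)"
  shows "disc \<alpha> \<beta> \<gamma> \<eta> \<rho> = (\<beta> - (\<alpha> * (2 - \<rho>) - \<rho> * \<gamma> * k + 2 * (1 - \<rho>) * q))
                              * (\<beta> - (\<alpha> * (2 - \<rho>) - \<rho> * \<gamma> * k - 2 * (1 - \<rho>) * q))"
proof -
  have q2: "q\<^sup>2 = \<alpha> * \<gamma> * k"
    using assms kappa_sqrt_squared[of \<alpha> \<gamma> \<eta>] by (simp add: q_def k_def)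
  have "disc \<alpha> \<beta> \<gamma> \<eta> \<rho> = (\<alpha> * (2 - \<rho>) + \<rho> * \<gamma> * k - \<beta>)\<^sup>2 - 4 * k * \<gamma> * (\<alpha> - \<beta> * \<rho>)"
    using assms(2) by (simp add: disc_def k_def field_simps)
  also have "\<dots> = (\<beta> - (\<alpha> * (2 - \<rho>) - \<rho> * \<gamma> * k + 2 * (1 - \<rho>) * q))
                  * (\<beta> - (\<alpha> * (2 - \<rho>) - \<rho> * \<gamma> * k - 2 * (1 - \<rho>) * q))"
    unfolding power2_eq_square using q2[unfolded power2_eq_square] by algebra
  finally show ?thesis .
qed

section \<open>Instability of the smaller endemic equilibrium\<close>

text \<open>Half the derivative of \<open>M i\<^sup>2 - p\<^sup>2 - q\<^sup>2\<close> along the field. At the equilibrium, \<open>G\<close> equals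
  the per-capita infection rate \<open>\<rho> \<beta> S - \<alpha> + \<beta> (1 - S - I - R)\<close>, and \<open>a0, c0\<close> are chosen
  so that the quadratic part not involving \<open>e1\<close> or \<open>Is\<close> is \<open>K i G + \<gamma> p\<^sup>2 + \<eta> q\<^sup>2\<close>.\<close>
lemma endemic_chetaev_identity:
  fixes S I R Ss Is Rs dS dI dR i p q s G \<alpha> \<beta> \<gamma> \<eta> \<rho> a0 c0 b0 K M \<sigma> e1 :: real
  assumes equilibrium: "\<eta> * Rs = \<alpha> * Is" "\<rho> * \<beta> * Ss - \<alpha> + \<beta> * (1 - Ss - Is - Rs) = 0"
      "- \<beta> * Is * Ss + \<gamma> * (1 - Ss - Is - Rs) + \<alpha> * Is = 0"
    and constants: "\<gamma> * a0 = \<alpha> - \<gamma> - b0" "\<eta> * c0 = \<alpha>" "M * Is = K"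
      "\<sigma> = - (1 - \<rho>) * \<beta> * a0 - \<rho> * \<beta> * c0 - \<beta>" "e1 = b0 - \<beta> * Ss"
    and field: "sir_field \<alpha> \<beta> \<gamma> \<eta> \<rho> (S, I, R) = (dS, dI, dR)"
    and deviation: "i = I - Is" "p = S - Ss + R - Rs - a0 * i" "q = R - Rs - c0 * i"
      "s = p + (a0 - c0) * i - q" "G = \<sigma> * i - (1 - \<rho>) * \<beta> * p - \<rho> * \<beta> * q"
  shows "M * i * dI - p * (dS + dR - a0 * dI) - q * (dR - c0 * dI)
    = K * i * G + \<gamma> * p\<^sup>2 + \<eta> * q\<^sup>2
      + (- e1 * p * i + Is * (\<beta> * p * s + a0 * p * G + c0 * q * G)
         + (M * i\<^sup>2 * G + \<beta> * p * i * s + a0 * p * i * G + c0 * q * i * G))"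
proof -
  have "dS = - \<beta> * I * S + \<gamma> * (1 - S - I - R) + \<eta> * R"
    "dI = \<rho> * \<beta> * I * S - \<alpha> * I + \<beta> * I * (1 - S - I - R)" "dR = \<alpha> * I - \<eta> * R"
    using field by simp_all
  then show ?thesis
    using equilibrium constants deviation by algebra
qed

lemma psd_binary_quadratic_form:
  fixes A B k x y :: real
  assumes "A \<ge> 0" "B \<ge> 0" "k\<^sup>2 \<le> A * B"
  shows "0 \<le> A * x\<^sup>2 + B * y\<^sup>2 + 2 * k * x * y"
proof (cases "A = 0")
  case True
  then show ?thesis using assms by simp
next
  case False
  then have "A > 0" using assms by simp
  have "A * (A * x\<^sup>2 + B * y\<^sup>2 + 2 * k * x * y) = (A * x + k * y)\<^sup>2 + (A * B - k\<^sup>2) * y\<^sup>2"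
    by (simp add: power2_eq_square algebra_simps)
  also have "\<dots> \<ge> 0"
    using assms by simp
  finally show ?thesis
    using \<open>A > 0\<close> by (simp add: zero_le_mult_iff)
qed

lemma chetaev_quadratic_part:
  fixes K \<sigma> \<gamma> \<eta> \<beta> \<rho> p i q :: real
  assumes pos: "K > 0" "\<sigma> > 0" "\<gamma> > 0" "\<eta> > 0"
    and small_K: "K * ((1 - \<rho>) * \<beta>)\<^sup>2 \<le> \<sigma> * \<gamma> / 2" "K * (\<rho> * \<beta>)\<^sup>2 \<le> \<sigma> * \<eta> / 2"
  shows "min (K * \<sigma> / 4) (min (\<gamma> / 2) (\<eta> / 2)) * (p\<^sup>2 + i\<^sup>2 + q\<^sup>2)
    \<le> K * i * (\<sigma> * i - (1 - \<rho>) * \<beta> * p - \<rho> * \<beta> * q) + \<gamma> * p\<^sup>2 + \<eta> * q\<^sup>2"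
proof -
  define m where "m = min (K * \<sigma> / 4) (min (\<gamma> / 2) (\<eta> / 2))"
  have cross: "0 \<le> K * \<sigma> / 4 * i\<^sup>2 + c / 2 * z\<^sup>2 + 2 * (- K * d / 2) * i * z"
    if "c > 0" "K * d\<^sup>2 \<le> \<sigma> * c / 2" for c d z
  proof (rule psd_binary_quadratic_form)
    have "(- K * d / 2)\<^sup>2 = K * (K * d\<^sup>2) / 4"
      by (simp add: power2_eq_square)
    also have "\<dots> \<le> K * (\<sigma> * c / 2) / 4"
      using that pos by (intro divide_right_mono mult_left_mono) auto
    finally show "(- K * d / 2)\<^sup>2 \<le> K * \<sigma> / 4 * (c / 2)"
      by simp
  qed (use pos that in auto)
  have "m \<le> K * \<sigma> / 4" "m \<le> \<gamma> / 2" "m \<le> \<eta> / 2"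
    by (simp_all add: m_def)
  moreover have "K * \<sigma> > 0"
    using pos by simp
  ultimately have "m \<le> K * \<sigma> / 2" "m \<le> \<gamma> / 2" "m \<le> \<eta> / 2"
    by linarith+
  then have "m * i\<^sup>2 \<le> K * \<sigma> / 2 * i\<^sup>2" "m * p\<^sup>2 \<le> \<gamma> / 2 * p\<^sup>2" "m * q\<^sup>2 \<le> \<eta> / 2 * q\<^sup>2"
    by (meson mult_right_mono zero_le_power2)+
  then have "m * (p\<^sup>2 + i\<^sup>2 + q\<^sup>2) \<le> K * \<sigma> / 2 * i\<^sup>2 + \<gamma> / 2 * p\<^sup>2 + \<eta> / 2 * q\<^sup>2"
    unfolding distrib_left by linarith
  also have "\<dots> \<le> K * \<sigma> / 2 * i\<^sup>2 + \<gamma> / 2 * p\<^sup>2 + \<eta> / 2 * q\<^sup>2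
        + (K * \<sigma> / 4 * i\<^sup>2 + \<gamma> / 2 * p\<^sup>2 + 2 * (- K * ((1 - \<rho>) * \<beta>) / 2) * i * p)
        + (K * \<sigma> / 4 * i\<^sup>2 + \<eta> / 2 * q\<^sup>2 + 2 * (- K * (\<rho> * \<beta>) / 2) * i * q)"
    using cross[OF pos(3) small_K(1), of p] cross[OF pos(4) small_K(2), of q] by linarith
  also have "\<dots> = K * i * (\<sigma> * i - (1 - \<rho>) * \<beta> * p - \<rho> * \<beta> * q) + \<gamma> * p\<^sup>2 + \<eta> * q\<^sup>2"
    by (simp add: power2_eq_square field_simps)
  finally show ?thesis
    by (simp add: m_def)
qed

lemma abs_mult_le_mult_power:
  fixes x y a b N :: real
  assumes "\<bar>x\<bar> \<le> a * N ^ m" "\<bar>y\<bar> \<le> b * N ^ n"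
  shows "\<bar>x * y\<bar> \<le> a * b * N ^ (m + n)"
proof -
  have "\<bar>x * y\<bar> \<le> (a * N ^ m) * (b * N ^ n)"
    unfolding abs_mult using assms by (intro mult_mono) (auto intro: order_trans[OF abs_ge_zero])
  then show ?thesis
    by (simp add: power_add algebra_simps)
qed

lemma abs_add_le_add:
  fixes x y a b :: real
  shows "\<bar>x\<bar> \<le> a \<Longrightarrow> \<bar>y\<bar> \<le> b \<Longrightarrow> \<bar>x + y\<bar> \<le> a + b"
  by (rule order_trans[OF abs_triangle_ineq add_mono])

lemma abs_deviation_forms_le:
  fixes p i q a c \<sigma> \<beta> \<rho> :: real
  assumes "\<beta> \<ge> 0" "\<sigma> \<ge> 0" "0 \<le> \<rho>" "\<rho> \<le> 1"
  shows "\<bar>p + (a - c) * i - q\<bar> \<le> (1 + \<bar>a - c\<bar>) * (\<bar>p\<bar> + \<bar>i\<bar> + \<bar>q\<bar>)"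
    and "\<bar>\<sigma> * i - (1 - \<rho>) * \<beta> * p - \<rho> * \<beta> * q\<bar> \<le> (\<sigma> + \<beta>) * (\<bar>p\<bar> + \<bar>i\<bar> + \<bar>q\<bar>)"
proof -
  have "\<bar>p + (a - c) * i - q\<bar> \<le> \<bar>p\<bar> + \<bar>a - c\<bar> * \<bar>i\<bar> + \<bar>q\<bar>"
    using abs_triangle_ineq4[of "p + (a - c) * i" q] abs_triangle_ineq[of p "(a - c) * i"]
    by (simp add: abs_mult)
  also have "\<dots> \<le> (1 + \<bar>a - c\<bar>) * (\<bar>p\<bar> + \<bar>i\<bar> + \<bar>q\<bar>)"
    by (simp add: algebra_simps mult_left_mono)
  finally show "\<bar>p + (a - c) * i - q\<bar> \<le> (1 + \<bar>a - c\<bar>) * (\<bar>p\<bar> + \<bar>i\<bar> + \<bar>q\<bar>)" .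
  have "\<bar>\<sigma> * i - (1 - \<rho>) * \<beta> * p - \<rho> * \<beta> * q\<bar> \<le> \<sigma> * \<bar>i\<bar> + (1 - \<rho>) * \<beta> * \<bar>p\<bar> + \<rho> * \<beta> * \<bar>q\<bar>"
    using abs_triangle_ineq4[of "\<sigma> * i - (1 - \<rho>) * \<beta> * p" "\<rho> * \<beta> * q"]
      abs_triangle_ineq4[of "\<sigma> * i" "(1 - \<rho>) * \<beta> * p"] assms by (simp add: abs_mult)
  also have "\<dots> \<le> \<sigma> * \<bar>i\<bar> + \<beta> * \<bar>p\<bar> + \<beta> * \<bar>q\<bar>"
    using assms by (intro add_mono mult_right_mono) (auto intro: mult_left_le_one_le)
  also have "\<dots> \<le> (\<sigma> + \<beta>) * (\<bar>p\<bar> + \<bar>i\<bar> + \<bar>q\<bar>)"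
  proof -
    have "\<sigma> * \<bar>i\<bar> \<le> \<sigma> * (\<bar>p\<bar> + \<bar>i\<bar> + \<bar>q\<bar>)" "\<beta> * (\<bar>p\<bar> + \<bar>q\<bar>) \<le> \<beta> * (\<bar>p\<bar> + \<bar>i\<bar> + \<bar>q\<bar>)"
      using assms by (auto intro!: mult_left_mono)
    then show ?thesis
      by (simp add: algebra_simps)
  qed
  finally show "\<bar>\<sigma> * i - (1 - \<rho>) * \<beta> * p - \<rho> * \<beta> * q\<bar> \<le> (\<sigma> + \<beta>) * (\<bar>p\<bar> + \<bar>i\<bar> + \<bar>q\<bar>)" .
qed

lemma chetaev_perturbation_bound:
  fixes p i q s G e1 Is \<beta> \<sigma> \<rho> a0 c0 M C :: real
  assumes nonneg: "Is \<ge> 0" "\<beta> \<ge> 0" "\<sigma> \<ge> 0" "c0 \<ge> 0" "M \<ge> 0" and \<rho>: "0 \<le> \<rho>" "\<rho> \<le> 1"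
    and s_def: "s = p + (a0 - c0) * i - q" and G_def: "G = \<sigma> * i - (1 - \<rho>) * \<beta> * p - \<rho> * \<beta> * q"
    and C_def: "C = \<beta> * (1 + \<bar>a0 - c0\<bar>) + (\<bar>a0\<bar> + c0) * (\<sigma> + \<beta>)"
  defines "N \<equiv> \<bar>p\<bar> + \<bar>i\<bar> + \<bar>q\<bar>"
  shows "\<bar>- e1 * p * i + Is * (\<beta> * p * s + a0 * p * G + c0 * q * G)
          + (M * i\<^sup>2 * G + \<beta> * p * i * s + a0 * p * i * G + c0 * q * i * G)\<bar>
    \<le> (\<bar>e1\<bar> + Is * C + N * (M * (\<sigma> + \<beta>) + C)) * N\<^sup>2"
proof -
  have coords: "\<bar>p\<bar> \<le> 1 * N ^ 1" "\<bar>i\<bar> \<le> 1 * N ^ 1" "\<bar>q\<bar> \<le> 1 * N ^ 1"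
    by (simp_all add: N_def)
  have s: "\<bar>s\<bar> \<le> (1 + \<bar>a0 - c0\<bar>) * N ^ 1"
    using abs_deviation_forms_le(1)[OF nonneg(2,3) \<rho>, where p=p and i=i and q=q and a=a0 and c=c0]
    by (simp add: s_def N_def)
  have G: "\<bar>G\<bar> \<le> (\<sigma> + \<beta>) * N ^ 1"
    using abs_deviation_forms_le(2)[OF nonneg(2,3) \<rho>, where p=p and i=i and q=q]
    by (simp add: G_def N_def)
  note prod = abs_mult_le_mult_power
  note add = abs_add_le_add
  have ps: "\<bar>p * s\<bar> \<le> (1 + \<bar>a0 - c0\<bar>) * N\<^sup>2" and pG: "\<bar>p * G\<bar> \<le> (\<sigma> + \<beta>) * N\<^sup>2"
    and qG: "\<bar>q * G\<bar> \<le> (\<sigma> + \<beta>) * N\<^sup>2" and pi: "\<bar>p * i\<bar> \<le> N\<^sup>2"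
    using prod[OF coords(1) s] prod[OF coords(1) G] prod[OF coords(3) G] prod[OF coords(1,2)]
    by (simp_all add: power2_eq_square)
  have iiG: "\<bar>i * (i * G)\<bar> \<le> (\<sigma> + \<beta>) * N ^ 3" and pis: "\<bar>p * (i * s)\<bar> \<le> (1 + \<bar>a0 - c0\<bar>) * N ^ 3"
    and piG: "\<bar>p * (i * G)\<bar> \<le> (\<sigma> + \<beta>) * N ^ 3" and qiG: "\<bar>q * (i * G)\<bar> \<le> (\<sigma> + \<beta>) * N ^ 3"
    using prod[OF coords(2) prod[OF coords(2) G]] prod[OF coords(1) prod[OF coords(2) s]]
      prod[OF coords(1) prod[OF coords(2) G]] prod[OF coords(3) prod[OF coords(2) G]]
    by (simp_all add: numeral_3_eq_3)
  have scale: "\<bar>c * x\<bar> \<le> \<bar>c\<bar> * B" if "\<bar>x\<bar> \<le> B" for c x B :: real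
    unfolding abs_mult by (rule mult_left_mono[OF that abs_ge_zero])
  have "\<bar>\<beta> * p * s + a0 * p * G + c0 * q * G\<bar>
      \<le> \<beta> * ((1 + \<bar>a0 - c0\<bar>) * N\<^sup>2) + \<bar>a0\<bar> * ((\<sigma> + \<beta>) * N\<^sup>2) + c0 * ((\<sigma> + \<beta>) * N\<^sup>2)"
  proof -
    have "\<bar>\<beta> * p * s\<bar> \<le> \<beta> * ((1 + \<bar>a0 - c0\<bar>) * N\<^sup>2)" "\<bar>a0 * p * G\<bar> \<le> \<bar>a0\<bar> * ((\<sigma> + \<beta>) * N\<^sup>2)"
      "\<bar>c0 * q * G\<bar> \<le> c0 * ((\<sigma> + \<beta>) * N\<^sup>2)"
      using scale[OF ps, of \<beta>] scale[OF pG, of a0] scale[OF qG, of c0] nonneg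
      by (simp_all add: mult.assoc)
    then show ?thesis
      by (intro add)
  qed
  also have "\<dots> = C * N\<^sup>2"
    by (simp add: C_def algebra_simps)
  finally have quadratic: "\<bar>Is * (\<beta> * p * s + a0 * p * G + c0 * q * G)\<bar> \<le> Is * (C * N\<^sup>2)"
    using nonneg(1) by (simp add: abs_mult mult_left_mono)
  have "\<bar>M * i\<^sup>2 * G + \<beta> * p * i * s + a0 * p * i * G + c0 * q * i * G\<bar>
      \<le> M * ((\<sigma> + \<beta>) * N ^ 3) + \<beta> * ((1 + \<bar>a0 - c0\<bar>) * N ^ 3)
         + \<bar>a0\<bar> * ((\<sigma> + \<beta>) * N ^ 3) + c0 * ((\<sigma> + \<beta>) * N ^ 3)"
  proof -
    have "\<bar>M * i\<^sup>2 * G\<bar> \<le> M * ((\<sigma> + \<beta>) * N ^ 3)"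
      "\<bar>\<beta> * p * i * s\<bar> \<le> \<beta> * ((1 + \<bar>a0 - c0\<bar>) * N ^ 3)"
      "\<bar>a0 * p * i * G\<bar> \<le> \<bar>a0\<bar> * ((\<sigma> + \<beta>) * N ^ 3)"
      "\<bar>c0 * q * i * G\<bar> \<le> c0 * ((\<sigma> + \<beta>) * N ^ 3)"
      using scale[OF iiG, of M] scale[OF pis, of \<beta>] scale[OF piG, of a0] scale[OF qiG, of c0] nonneg
      by (simp_all add: mult.assoc power2_eq_square)
    then show ?thesis
      by (intro add)
  qed
  also have "\<dots> = N * (M * (\<sigma> + \<beta>) + C) * N\<^sup>2"
    by (simp add: C_def power2_eq_square power3_eq_cube algebra_simps)
  finally have cubic: "\<bar>M * i\<^sup>2 * G + \<beta> * p * i * s + a0 * p * i * G + c0 * q * i * G\<bar>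
      \<le> N * (M * (\<sigma> + \<beta>) + C) * N\<^sup>2" .
  have "\<bar>- e1 * p * i\<bar> \<le> \<bar>e1\<bar> * N\<^sup>2"
    using scale[OF pi, of "- e1"] by (simp add: mult.assoc)
  then have "\<bar>- e1 * p * i + Is * (\<beta> * p * s + a0 * p * G + c0 * q * G)
          + (M * i\<^sup>2 * G + \<beta> * p * i * s + a0 * p * i * G + c0 * q * i * G)\<bar>
      \<le> \<bar>e1\<bar> * N\<^sup>2 + Is * (C * N\<^sup>2) + N * (M * (\<sigma> + \<beta>) + C) * N\<^sup>2"
    using quadratic cubic by (intro add)
  then show ?thesis
    by (simp add: algebra_simps)
qed

lemma deviation_norm_le:
  fixes S I R Ss Is Rs a0 c0 r :: real
  assumes "c0 \<ge> 0" "\<bar>S - Ss\<bar> \<le> r" "\<bar>I - Is\<bar> \<le> r" "\<bar>R - Rs\<bar> \<le> r"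
  shows "\<bar>S - Ss + R - Rs - a0 * (I - Is)\<bar> + \<bar>I - Is\<bar> + \<bar>R - Rs - c0 * (I - Is)\<bar> \<le> (4 + \<bar>a0\<bar> + c0) * r"
proof -
  have "S - Ss + R - Rs - a0 * (I - Is) = (S - Ss) + (R - Rs) - a0 * (I - Is)"
    by simp
  also have "\<bar>\<dots>\<bar> \<le> \<bar>(S - Ss) + (R - Rs)\<bar> + \<bar>a0 * (I - Is)\<bar>"
    by (rule abs_triangle_ineq4)
  also have "\<dots> \<le> \<bar>S - Ss\<bar> + \<bar>R - Rs\<bar> + \<bar>a0\<bar> * \<bar>I - Is\<bar>"
    using abs_triangle_ineq[of "S - Ss" "R - Rs"] by (simp add: abs_mult)
  also have "\<dots> \<le> r + r + \<bar>a0\<bar> * r"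
    using assms by (intro add_mono mult_left_mono) auto
  finally have p: "\<bar>S - Ss + R - Rs - a0 * (I - Is)\<bar> \<le> (2 + \<bar>a0\<bar>) * r"
    by (simp add: algebra_simps)
  have "\<bar>R - Rs - c0 * (I - Is)\<bar> \<le> \<bar>R - Rs\<bar> + c0 * \<bar>I - Is\<bar>"
    using abs_triangle_ineq4[of "R - Rs" "c0 * (I - Is)"] assms(1) by (simp add: abs_mult)
  also have "\<dots> \<le> r + c0 * r"
    using assms by (intro add_mono mult_left_mono) auto
  finally have "\<bar>R - Rs - c0 * (I - Is)\<bar> \<le> (1 + c0) * r"
    by (simp add: algebra_simps)
  with p assms(3) show ?thesis
    by (simp add: algebra_simps)
qed

lemma endemic_chetaev_growth:
  fixes S I R Ss Is Rs dS dI dR i p q \<alpha> \<beta> \<gamma> \<eta> \<rho> a0 c0 K M \<sigma> e1 C r \<nu> :: real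
  assumes pos: "\<beta> > 0" "\<gamma> > 0" "\<eta> > 0" "0 < \<rho>" "\<rho> < 1" "Is \<ge> 0" "c0 \<ge> 0" "M \<ge> 0"
    and equilibrium: "\<eta> * Rs = \<alpha> * Is" "\<rho> * \<beta> * Ss - \<alpha> + \<beta> * (1 - Ss - Is - Rs) = 0"
      "- \<beta> * Is * Ss + \<gamma> * (1 - Ss - Is - Rs) + \<alpha> * Is = 0"
    and constants: "\<gamma> * a0 = \<alpha> - \<gamma> - \<alpha> / \<rho>" "\<eta> * c0 = \<alpha>" "M * Is = K"
      "\<sigma> = - (1 - \<rho>) * \<beta> * a0 - \<rho> * \<beta> * c0 - \<beta>" "e1 = \<alpha> / \<rho> - \<beta> * Ss"
      "C = \<beta> * (1 + \<bar>a0 - c0\<bar>) + (\<bar>a0\<bar> + c0) * (\<sigma> + \<beta>)"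
    and K: "K > 0" "\<sigma> > 0" "K * ((1 - \<rho>) * \<beta>)\<^sup>2 \<le> \<sigma> * \<gamma> / 2" "K * (\<rho> * \<beta>)\<^sup>2 \<le> \<sigma> * \<eta> / 2"
    and near: "\<bar>S - Ss\<bar> \<le> r" "\<bar>I - Is\<bar> \<le> r" "\<bar>R - Rs\<bar> \<le> r" "(4 + \<bar>a0\<bar> + c0) * r \<le> \<nu>"
    and field: "sir_field \<alpha> \<beta> \<gamma> \<eta> \<rho> (S, I, R) = (dS, dI, dR)"
    and deviation: "i = I - Is" "p = S - Ss + R - Rs - a0 * i" "q = R - Rs - c0 * i"
  shows "(min (K * \<sigma> / 4) (min (\<gamma> / 2) (\<eta> / 2)) - 3 * (\<bar>e1\<bar> + Is * C + \<nu> * (M * (\<sigma> + \<beta>) + C)))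
           * (p\<^sup>2 + i\<^sup>2 + q\<^sup>2)
         \<le> M * i * dI - p * (dS + dR - a0 * dI) - q * (dR - c0 * dI)"
proof -
  define s where "s = p + (a0 - c0) * i - q"
  define G where "G = \<sigma> * i - (1 - \<rho>) * \<beta> * p - \<rho> * \<beta> * q"
  define N where "N = \<bar>p\<bar> + \<bar>i\<bar> + \<bar>q\<bar>"
  define P where "P = - e1 * p * i + Is * (\<beta> * p * s + a0 * p * G + c0 * q * G)
      + (M * i\<^sup>2 * G + \<beta> * p * i * s + a0 * p * i * G + c0 * q * i * G)"
  define C3 where "C3 = M * (\<sigma> + \<beta>) + C"
  have "C \<ge> 0"
    using pos K by (simp add: constants(6))
  then have C: "C \<ge> 0" "C3 \<ge> 0"
    using pos K by (simp_all add: C3_def)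
  have "N \<le> (4 + \<bar>a0\<bar> + c0) * r"
    using deviation_norm_le[OF pos(7) near(1-3)] by (simp add: N_def deviation)
  then have N: "N \<le> \<nu>" "N \<ge> 0"
    using near(4) by (auto simp: N_def)
  have N_sq: "N\<^sup>2 \<le> 3 * (p\<^sup>2 + i\<^sup>2 + q\<^sup>2)"
    using zero_le_power2[of "\<bar>p\<bar> - \<bar>i\<bar>"] zero_le_power2[of "\<bar>p\<bar> - \<bar>q\<bar>"] zero_le_power2[of "\<bar>i\<bar> - \<bar>q\<bar>"]
    by (simp add: N_def power2_eq_square algebra_simps)
  have "\<bar>P\<bar> \<le> (\<bar>e1\<bar> + Is * C + N * C3) * N\<^sup>2"
    unfolding P_def N_def C3_def using pos K(2)
    by (intro chetaev_perturbation_bound) (auto simp: s_def G_def constants(6))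
  also have "\<dots> \<le> (\<bar>e1\<bar> + Is * C + \<nu> * C3) * N\<^sup>2"
    using N C by (intro mult_right_mono add_mono mult_right_mono) auto
  also have "\<dots> \<le> (\<bar>e1\<bar> + Is * C + \<nu> * C3) * (3 * (p\<^sup>2 + i\<^sup>2 + q\<^sup>2))"
    using N_sq N C pos by (intro mult_left_mono add_nonneg_nonneg mult_nonneg_nonneg) auto
  also have "\<dots> = 3 * (\<bar>e1\<bar> + Is * C + \<nu> * C3) * (p\<^sup>2 + i\<^sup>2 + q\<^sup>2)"
    by (simp add: algebra_simps)
  finally have perturbation: "- P \<le> 3 * (\<bar>e1\<bar> + Is * C + \<nu> * C3) * (p\<^sup>2 + i\<^sup>2 + q\<^sup>2)"
    by (rule abs_le_D2)
  have "min (K * \<sigma> / 4) (min (\<gamma> / 2) (\<eta> / 2)) * (p\<^sup>2 + i\<^sup>2 + q\<^sup>2)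
      \<le> K * i * G + \<gamma> * p\<^sup>2 + \<eta> * q\<^sup>2"
    unfolding G_def by (rule chetaev_quadratic_part[OF K(1,2) pos(2,3) K(3,4)])
  moreover have "M * i * dI - p * (dS + dR - a0 * dI) - q * (dR - c0 * dI)
      = K * i * G + \<gamma> * p\<^sup>2 + \<eta> * q\<^sup>2 + P"
    unfolding P_def
    by (rule endemic_chetaev_identity[OF equilibrium constants(1-5) field deviation s_def G_def])
  ultimately show ?thesis
    using perturbation unfolding C3_def left_diff_distrib by linarith
qed

lemma endemic_equilibrium_equations:
  assumes "endemic_equilibrium \<alpha> \<beta> \<gamma> \<eta> \<rho> (Ss, Is, Rs)"
  shows "\<eta> * Rs = \<alpha> * Is" "\<rho> * \<beta> * Ss - \<alpha> + \<beta> * (1 - Ss - Is - Rs) = 0"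
    "- \<beta> * Is * Ss + \<gamma> * (1 - Ss - Is - Rs) + \<alpha> * Is = 0"
proof -
  have Is: "Is > 0" and "sir_field \<alpha> \<beta> \<gamma> \<eta> \<rho> (Ss, Is, Rs) = 0"
    using assms by (simp_all add: endemic_equilibrium_def is_equilibrium_def)
  then have "- \<beta> * Is * Ss + \<gamma> * (1 - Ss - Is - Rs) + \<eta> * Rs = 0"
      "Is * (\<rho> * \<beta> * Ss - \<alpha> + \<beta> * (1 - Ss - Is - Rs)) = 0" "\<alpha> * Is - \<eta> * Rs = 0"
    unfolding sir_field_apply zero_prod_def prod.inject by (simp_all only: algebra_simps)
  then show "\<eta> * Rs = \<alpha> * Is" "\<rho> * \<beta> * Ss - \<alpha> + \<beta> * (1 - Ss - Is - Rs) = 0"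
      "- \<beta> * Is * Ss + \<gamma> * (1 - Ss - Is - Rs) + \<alpha> * Is = 0"
    using Is by auto
qed

text \<open>The coercivity constant of \<open>K i G + \<gamma> p\<^sup>2 + \<eta> q\<^sup>2\<close> minus the size of the quadratic terms
  that vanish as \<open>\<E>\<^sub>-\<close> merges with \<open>\<E>\<^sub>0\<close>; \<open>\<E>\<^sub>-\<close> is unstable whenever it is positive.\<close>
definition endemic_chetaev_margin :: "real \<Rightarrow> real \<Rightarrow> real \<Rightarrow> real \<Rightarrow> real \<Rightarrow> real \<Rightarrow> real \<Rightarrow> real" where
  "endemic_chetaev_margin \<alpha> \<beta> \<gamma> \<eta> \<rho> Ss Is =
     (let a0 = (\<alpha> - \<gamma> - \<alpha> / \<rho>) / \<gamma>; c0 = \<alpha> / \<eta>;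
          \<sigma> = - (1 - \<rho>) * \<beta> * a0 - \<rho> * \<beta> * c0 - \<beta>;
          K = \<sigma> * min (\<gamma> / (2 * ((1 - \<rho>) * \<beta>)\<^sup>2)) (\<eta> / (2 * (\<rho> * \<beta>)\<^sup>2));
          C = \<beta> * (1 + \<bar>a0 - c0\<bar>) + (\<bar>a0\<bar> + c0) * (\<sigma> + \<beta>)
      in min (K * \<sigma> / 4) (min (\<gamma> / 2) (\<eta> / 2)) - 3 * (\<bar>\<alpha> / \<rho> - \<beta> * Ss\<bar> + Is * C))"

lemma endemic_equilibrium_unstable:
  fixes \<alpha> \<beta> \<gamma> \<eta> \<rho> Ss Is Rs :: real
  assumes pos: "\<alpha> > 0" "\<beta> > 0" "\<gamma> > 0" "\<eta> > 0" "0 < \<rho>" "\<rho> < 1"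
    and endemic: "endemic_equilibrium \<alpha> \<beta> \<gamma> \<eta> \<rho> (Ss, Is, Rs)"
    and slope: "- (1 - \<rho>) * ((\<alpha> - \<gamma> - \<alpha> / \<rho>) / \<gamma>) - \<rho> * (\<alpha> / \<eta>) - 1 > 0"
    and margin: "endemic_chetaev_margin \<alpha> \<beta> \<gamma> \<eta> \<rho> Ss Is > 0"
  shows "unstable (sir_field \<alpha> \<beta> \<gamma> \<eta> \<rho>) (Ss, Is, Rs)"
proof -
  define a0 where "a0 = (\<alpha> - \<gamma> - \<alpha> / \<rho>) / \<gamma>"
  define c0 where "c0 = \<alpha> / \<eta>"
  define \<sigma> where "\<sigma> = - (1 - \<rho>) * \<beta> * a0 - \<rho> * \<beta> * c0 - \<beta>"
  define K where "K = \<sigma> * min (\<gamma> / (2 * ((1 - \<rho>) * \<beta>)\<^sup>2)) (\<eta> / (2 * (\<rho> * \<beta>)\<^sup>2))"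
  define C where "C = \<beta> * (1 + \<bar>a0 - c0\<bar>) + (\<bar>a0\<bar> + c0) * (\<sigma> + \<beta>)"
  define e1 where "e1 = \<alpha> / \<rho> - \<beta> * Ss"
  define m where "m = min (K * \<sigma> / 4) (min (\<gamma> / 2) (\<eta> / 2)) - 3 * (\<bar>e1\<bar> + Is * C)"
  have m: "m > 0"
    using margin by (simp add: endemic_chetaev_margin_def Let_def m_def e1_def C_def K_def \<sigma>_def
        a0_def c0_def)
  have equilibrium: "sir_field \<alpha> \<beta> \<gamma> \<eta> \<rho> (Ss, Is, Rs) = 0" and Is: "Is > 0"
    using endemic by (simp_all add: endemic_equilibrium_def is_equilibrium_def)
  note eqs = endemic_equilibrium_equations[OF endemic]
  have "\<sigma> = \<beta> * (- (1 - \<rho>) * a0 - \<rho> * c0 - 1)"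
    by (simp add: \<sigma>_def algebra_simps)
  then have \<sigma>: "\<sigma> > 0"
    using slope pos by (simp add: a0_def c0_def)
  have c0: "c0 \<ge> 0"
    using pos by (simp add: c0_def)
  have K: "K > 0" "K * ((1 - \<rho>) * \<beta>)\<^sup>2 \<le> \<sigma> * \<gamma> / 2" "K * (\<rho> * \<beta>)\<^sup>2 \<le> \<sigma> * \<eta> / 2"
    using \<sigma> pos by (auto simp: K_def field_simps min_def)
  define M where "M = K / Is"
  have M: "M > 0" "M * Is = K"
    using K Is by (simp_all add: M_def)
  have C: "C \<ge> 0"
    using pos \<sigma> c0 by (simp add: C_def)
  define \<nu> where "\<nu> = m / (6 * (M * (\<sigma> + \<beta>) + C + 1))"
  have D: "M * (\<sigma> + \<beta>) + C \<ge> 0"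
    using M C \<sigma> pos by simp
  then have "\<nu> > 0"
    using m by (simp add: \<nu>_def)
  have "3 * (\<nu> * (M * (\<sigma> + \<beta>) + C)) = m / 2 * ((M * (\<sigma> + \<beta>) + C) / (M * (\<sigma> + \<beta>) + C + 1))"
    using D by (simp add: \<nu>_def field_simps)
  also have "\<dots> \<le> m / 2 * 1"
    using m D by (intro mult_left_mono) auto
  finally have \<nu>: "\<nu> > 0" "3 * (\<nu> * (M * (\<sigma> + \<beta>) + C)) \<le> m / 2"
    using \<open>\<nu> > 0\<close> by simp_all
  define r where "r = \<nu> / (4 + \<bar>a0\<bar> + c0)"
  have r: "r > 0" "(4 + \<bar>a0\<bar> + c0) * r \<le> \<nu>"
    using \<nu> c0 by (simp_all add: r_def add_pos_nonneg)
  obtain L where lip: "L-lipschitz_on (cball (Ss, Is, Rs) r) (sir_field \<alpha> \<beta> \<gamma> \<eta> \<rho>)"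
    by (rule sir_field_lipschitz_on_cball)
  define P where "P y = fst y - Ss + snd (snd y) - Rs - a0 * (fst (snd y) - Is)" for y :: "real \<times> real \<times> real"
  define Q where "Q y = snd (snd y) - Rs - c0 * (fst (snd y) - Is)" for y :: "real \<times> real \<times> real"
  define W where "W y = M * (fst (snd y) - Is)\<^sup>2 - (P y)\<^sup>2 - (Q y)\<^sup>2" for y
  define DW where "DW y h = 2 * M * (fst (snd y) - Is) * fst (snd h)
      - 2 * P y * (fst h + snd (snd h) - a0 * fst (snd h)) - 2 * Q y * (snd (snd h) - c0 * fst (snd h))"
    for y h :: "real \<times> real \<times> real"
  show ?thesis
  proof (rule chetaev_unstable[OF equilibrium r(1) lip, of W DW "m / M" "M * r\<^sup>2"])
    show "(W has_derivative DW y) (at y)" for y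
      unfolding W_def DW_def P_def Q_def by (auto intro!: derivative_eq_intros simp: algebra_simps)
    show "m / M > 0"
      using m M by simp
  next
    fix y :: "real \<times> real \<times> real" assume y: "y \<in> cball (Ss, Is, Rs) r"
    obtain S I R where y_eq: "y = (S, I, R)" by (cases y) auto
    note near = abs_diff_le_dist_cball[OF y[unfolded y_eq]]
    define Sg where "Sg = (P y)\<^sup>2 + (I - Is)\<^sup>2 + (Q y)\<^sup>2"
    obtain dS dI dR where field: "sir_field \<alpha> \<beta> \<gamma> \<eta> \<rho> (S, I, R) = (dS, dI, dR)"
      by (metis prod_cases3)
    have "(min (K * \<sigma> / 4) (min (\<gamma> / 2) (\<eta> / 2)) - 3 * (\<bar>e1\<bar> + Is * C + \<nu> * (M * (\<sigma> + \<beta>) + C))) * Sg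
        \<le> M * (I - Is) * dI - P y * (dS + dR - a0 * dI) - Q y * (dR - c0 * dI)"
      unfolding Sg_def
      by (rule endemic_chetaev_growth[OF pos(2-6) less_imp_le[OF Is] c0 less_imp_le[OF M(1)] eqs
            _ _ M(2) \<sigma>_def e1_def C_def K(1) \<sigma> K(2,3) near r(2) field])
        (use pos in \<open>simp_all add: a0_def c0_def P_def Q_def y_eq\<close>)
    moreover have "m / 2 \<le> min (K * \<sigma> / 4) (min (\<gamma> / 2) (\<eta> / 2))
        - 3 * (\<bar>e1\<bar> + Is * C + \<nu> * (M * (\<sigma> + \<beta>) + C))"
      using \<nu>(2) unfolding m_def by argo
    moreover have "Sg \<ge> 0"
      by (simp add: Sg_def)
    ultimately have "m / 2 * Sg \<le> M * (I - Is) * dI - P y * (dS + dR - a0 * dI) - Q y * (dR - c0 * dI)"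
      by (meson mult_right_mono order_trans)
    moreover have "W y \<le> M * Sg"
      using M by (simp add: W_def Sg_def y_eq algebra_simps)
    then have "m / M * W y \<le> m * Sg"
      using m M by (simp add: field_simps mult_left_mono)
    moreover have "DW y (sir_field \<alpha> \<beta> \<gamma> \<eta> \<rho> y)
        = 2 * (M * (I - Is) * dI - P y * (dS + dR - a0 * dI) - Q y * (dR - c0 * dI))"
      unfolding DW_def y_eq field by (simp add: algebra_simps)
    moreover have "m * Sg = 2 * (m / 2 * Sg)"
      by simp
    ultimately show "m / M * W y \<le> DW y (sir_field \<alpha> \<beta> \<gamma> \<eta> \<rho> y)"
      by argo
    have "W y \<le> M * (I - Is)\<^sup>2"
      by (simp add: W_def y_eq)
    also have "\<dots> \<le> M * r\<^sup>2"
      using near(2) M by (intro mult_left_mono) (auto simp: abs_le_square_iff[symmetric] power_mono)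
    finally show "W y \<le> M * r\<^sup>2" .
  next
    fix \<delta> :: real assume \<delta>: "\<delta> > 0"
    define v :: "real \<times> real \<times> real" where "v = (a0 - c0, 1, c0)"
    have "norm v > 0"
      by (simp add: v_def zero_prod_def)
    define t where "t = \<delta> / (2 * norm v)"
    have t: "t > 0"
      using \<delta> \<open>norm v > 0\<close> by (simp add: t_def)
    have "dist ((Ss, Is, Rs) + t *\<^sub>R v) (Ss, Is, Rs) = \<delta> / 2"
      using \<delta> \<open>norm v > 0\<close> by (simp add: dist_norm t_def)
    moreover have "W ((Ss, Is, Rs) + t *\<^sub>R v) = M * t\<^sup>2"
      by (simp add: W_def P_def Q_def v_def algebra_simps)
    ultimately show "\<exists>y. dist y (Ss, Is, Rs) < \<delta> \<and> W y > 0"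
      using \<delta> t M by (intro exI[of _ "(Ss, Is, Rs) + t *\<^sub>R v"]) simp
  qed
qed

section \<open>Consequences of \<open>\<rho> < \<rho>\<^sup>*\<close>\<close>

context
  fixes \<alpha> \<gamma> \<eta> \<rho> :: real
  assumes pos: "\<alpha> > 0" "\<gamma> > 0" "\<eta> > 0" "0 < \<rho>" "\<rho> < 1"
    and recovery_ge: "\<gamma> \<ge> \<alpha>" and below_rho_star: "\<rho> < rho_star \<alpha> \<gamma> \<eta>"
begin

lemma rho_star_margin: "\<alpha> * (1 - \<rho>) - \<rho> * sqrt (\<alpha> * \<gamma> * kappa \<alpha> \<eta>) > 0"
proof -
  have "\<alpha> + sqrt (\<alpha> * \<gamma> * kappa \<alpha> \<eta>) > 0"
    using pos kappa_gt_one[of \<alpha> \<eta>] by (intro add_pos_nonneg) auto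
  then have "\<rho> * (\<alpha> + sqrt (\<alpha> * \<gamma> * kappa \<alpha> \<eta>)) < \<alpha>"
    using below_rho_star pos recovery_ge by (simp add: rho_star_eq pos_less_divide_eq)
  then show ?thesis
    by (simp add: algebra_simps)
qed

lemma RC_less_one: "RC \<alpha> \<gamma> \<eta> \<rho> < 1"
  using rho_star_margin pos by (simp add: RC_eq)

text \<open>The two roots of the discriminant, viewed as a quadratic in \<open>\<beta>\<close>; the larger one is the
  transmission rate at which \<open>R0 = RC\<close>.\<close>
lemma critical_transmission_rates:
  defines "k \<equiv> kappa \<alpha> \<eta>" and "q \<equiv> sqrt (\<alpha> * \<gamma> * kappa \<alpha> \<eta>)"
  shows "\<alpha> * RC \<alpha> \<gamma> \<eta> \<rho> / \<rho> = \<alpha> * (2 - \<rho>) - \<rho> * \<gamma> * k + 2 * (1 - \<rho>) * q"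
    and "\<alpha> * (2 - \<rho>) - \<rho> * \<gamma> * k + 2 * (1 - \<rho>) * q > \<alpha> * (2 - \<rho>) + \<rho> * \<gamma> * k"
    and "\<alpha> * (2 - \<rho>) - \<rho> * \<gamma> * k - 2 * (1 - \<rho>) * q < 0"
proof -
  have q2: "q\<^sup>2 = \<alpha> * \<gamma> * k"
    using pos kappa_sqrt_squared[of \<alpha> \<gamma> \<eta>] by (simp add: q_def k_def)
  have \<gamma>k: "\<gamma> * k = q\<^sup>2 / \<alpha>"
    using q2 pos by (simp add: field_simps)
  have q: "q > \<alpha>"
    using sqrt_alpha_gamma_kappa_gt[of \<alpha> \<gamma> \<eta>] pos recovery_ge by (simp add: q_def)
  show "\<alpha> * RC \<alpha> \<gamma> \<eta> \<rho> / \<rho> = \<alpha> * (2 - \<rho>) - \<rho> * \<gamma> * k + 2 * (1 - \<rho>) * q"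
    unfolding RC_def q_def[symmetric] using pos
    by (simp add: k_def[symmetric] \<gamma>k field_simps power2_eq_square)
  have "\<alpha> * (2 - \<rho>) - \<rho> * \<gamma> * k + 2 * (1 - \<rho>) * q - (\<alpha> * (2 - \<rho>) + \<rho> * \<gamma> * k)
      = 2 * q * (\<alpha> * (1 - \<rho>) - \<rho> * q) / \<alpha>"
    using pos by (simp add: \<gamma>k field_simps power2_eq_square)
  moreover have "2 * q * (\<alpha> * (1 - \<rho>) - \<rho> * q) / \<alpha> > 0"
    using rho_star_margin q pos by (intro divide_pos_pos mult_pos_pos) (auto simp: q_def[symmetric])
  ultimately show "\<alpha> * (2 - \<rho>) - \<rho> * \<gamma> * k + 2 * (1 - \<rho>) * q > \<alpha> * (2 - \<rho>) + \<rho> * \<gamma> * k"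
    by linarith
  have "\<alpha> * (2 - \<rho>) - \<rho> * \<gamma> * k - 2 * (1 - \<rho>) * q = - (q - \<alpha>) * (\<rho> * (q - \<alpha>) + 2 * \<alpha>) / \<alpha>"
    using pos by (simp add: \<gamma>k field_simps power2_eq_square)
  also have "\<dots> < 0"
    using q pos by (intro divide_neg_pos mult_neg_pos add_pos_pos mult_pos_pos) auto
  finally show "\<alpha> * (2 - \<rho>) - \<rho> * \<gamma> * k - 2 * (1 - \<rho>) * q < 0" .
qed

lemma R0_ge_RC_iff:
  assumes "\<beta> > 0"
  shows "RC \<alpha> \<gamma> \<eta> \<rho> \<le> R0 \<alpha> \<beta> \<rho> \<longleftrightarrow> \<alpha> * RC \<alpha> \<gamma> \<eta> \<rho> / \<rho> \<le> \<beta>"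
    and "RC \<alpha> \<gamma> \<eta> \<rho> = R0 \<alpha> \<beta> \<rho> \<longleftrightarrow> \<beta> = \<alpha> * RC \<alpha> \<gamma> \<eta> \<rho> / \<rho>"
  using pos by (auto simp: R0_def field_simps)

lemma disc_nonneg_iff:
  assumes "\<beta> > 0"
  shows "disc \<alpha> \<beta> \<gamma> \<eta> \<rho> \<ge> 0 \<longleftrightarrow> RC \<alpha> \<gamma> \<eta> \<rho> \<le> R0 \<alpha> \<beta> \<rho>"
    and "disc \<alpha> \<beta> \<gamma> \<eta> \<rho> = 0 \<longleftrightarrow> RC \<alpha> \<gamma> \<eta> \<rho> = R0 \<alpha> \<beta> \<rho>"
proof -
  note rates = critical_transmission_rates
  have "\<beta> - (\<alpha> * (2 - \<rho>) - \<rho> * \<gamma> * kappa \<alpha> \<eta> - 2 * (1 - \<rho>) * sqrt (\<alpha> * \<gamma> * kappa \<alpha> \<eta>)) > 0"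
    using rates(3) assms by linarith
  then show "disc \<alpha> \<beta> \<gamma> \<eta> \<rho> \<ge> 0 \<longleftrightarrow> RC \<alpha> \<gamma> \<eta> \<rho> \<le> R0 \<alpha> \<beta> \<rho>"
    and "disc \<alpha> \<beta> \<gamma> \<eta> \<rho> = 0 \<longleftrightarrow> RC \<alpha> \<gamma> \<eta> \<rho> = R0 \<alpha> \<beta> \<rho>"
    unfolding disc_factorization[OF pos(1) assms pos(2,3)] R0_ge_RC_iff[OF assms] rates(1)
    by (auto simp: zero_le_mult_iff)
qed

lemma linear_coefficient_neg:
  assumes "\<beta> > 0" "RC \<alpha> \<gamma> \<eta> \<rho> \<le> R0 \<alpha> \<beta> \<rho>"
  shows "\<alpha> * (2 - \<rho>) + \<rho> * \<gamma> * kappa \<alpha> \<eta> - \<beta> < 0"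
  using assms critical_transmission_rates(1,2) R0_ge_RC_iff(1)[OF assms(1)] by linarith

lemma no_endemic_equilibrium:
  assumes "\<beta> > 0" "R0 \<alpha> \<beta> \<rho> < RC \<alpha> \<gamma> \<eta> \<rho>"
  shows "{x. endemic_equilibrium \<alpha> \<beta> \<gamma> \<eta> \<rho> x} = {}"
  using assms disc_nonneg_iff(1)[OF assms(1)] pos
  by (simp add: endemic_equilibria_eq)

lemma two_endemic_equilibria:
  assumes "\<beta> > 0" "RC \<alpha> \<gamma> \<eta> \<rho> \<le> R0 \<alpha> \<beta> \<rho>" "R0 \<alpha> \<beta> \<rho> < 1"
  shows "{x. endemic_equilibrium \<alpha> \<beta> \<gamma> \<eta> \<rho> x} = {E_plus \<alpha> \<beta> \<gamma> \<eta> \<rho>, E_minus \<alpha> \<beta> \<gamma> \<eta> \<rho>}"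
    and "E_plus \<alpha> \<beta> \<gamma> \<eta> \<rho> = E_minus \<alpha> \<beta> \<gamma> \<eta> \<rho> \<longleftrightarrow> RC \<alpha> \<gamma> \<eta> \<rho> = R0 \<alpha> \<beta> \<rho>"
proof -
  define b where "b = \<alpha> * (2 - \<rho>) + \<rho> * \<gamma> * kappa \<alpha> \<eta> - \<beta>"
  define d where "d = disc \<alpha> \<beta> \<gamma> \<eta> \<rho>"
  have den: "2 * \<beta> * kappa \<alpha> \<eta> > 0"
    using assms(1) pos kappa_gt_one[of \<alpha> \<eta>] by simp
  have d: "d \<ge> 0"
    using disc_nonneg_iff(1)[OF assms(1)] assms(2) by (simp add: d_def)
  have b: "b < 0"
    using linear_coefficient_neg[OF assms(1,2)] by (simp add: b_def)
  have "\<gamma> * (\<alpha> / \<beta> - \<rho>) > 0"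
    using assms(1,3) pos by (simp add: R0_def field_simps)
  then have "d < b\<^sup>2"
    using assms(1) pos kappa_gt_one[of \<alpha> \<eta>] by (simp add: d_def disc_def b_def)
  then have "sqrt d < - b"
    using b real_sqrt_less_mono[of d "b\<^sup>2"] by simp
  moreover have "0 < \<beta> - \<rho> * \<gamma> * kappa \<alpha> \<eta> - \<alpha> * (2 - \<rho>) + sqrt d"
    using b real_sqrt_ge_zero[OF d] unfolding b_def by linarith
  ultimately have I_pos: "I_minus \<alpha> \<beta> \<gamma> \<eta> \<rho> > 0" "I_plus \<alpha> \<beta> \<gamma> \<eta> \<rho> > 0"
    using den by (auto simp: I_minus_def I_plus_def d_def[symmetric] b_def)
  show "{x. endemic_equilibrium \<alpha> \<beta> \<gamma> \<eta> \<rho> x} = {E_plus \<alpha> \<beta> \<gamma> \<eta> \<rho>, E_minus \<alpha> \<beta> \<gamma> \<eta> \<rho>}"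
    using d I_pos pos assms(1) by (auto simp: endemic_equilibria_eq E_plus_def E_minus_def d_def)
  have "E_plus \<alpha> \<beta> \<gamma> \<eta> \<rho> = E_minus \<alpha> \<beta> \<gamma> \<eta> \<rho> \<longleftrightarrow> I_plus \<alpha> \<beta> \<gamma> \<eta> \<rho> = I_minus \<alpha> \<beta> \<gamma> \<eta> \<rho>"
    by (auto simp: E_plus_def E_minus_def eq_point_def)
  also have "\<dots> \<longleftrightarrow> d = 0"
    using den by (auto simp: I_plus_def I_minus_def d_def[symmetric] divide_cancel_right)
  finally show "E_plus \<alpha> \<beta> \<gamma> \<eta> \<rho> = E_minus \<alpha> \<beta> \<gamma> \<eta> \<rho> \<longleftrightarrow> RC \<alpha> \<gamma> \<eta> \<rho> = R0 \<alpha> \<beta> \<rho>"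
    using disc_nonneg_iff(2)[OF assms(1)] by (simp add: d_def)
qed

lemma unique_endemic_equilibrium:
  assumes "\<beta> > 0" "1 \<le> R0 \<alpha> \<beta> \<rho>"
  shows "{x. endemic_equilibrium \<alpha> \<beta> \<gamma> \<eta> \<rho> x} = {E_plus \<alpha> \<beta> \<gamma> \<eta> \<rho>}"
proof -
  define b where "b = \<alpha> * (2 - \<rho>) + \<rho> * \<gamma> * kappa \<alpha> \<eta> - \<beta>"
  define d where "d = disc \<alpha> \<beta> \<gamma> \<eta> \<rho>"
  have den: "2 * \<beta> * kappa \<alpha> \<eta> > 0"
    using assms(1) pos kappa_gt_one[of \<alpha> \<eta>] by simp
  have RC_le: "RC \<alpha> \<gamma> \<eta> \<rho> \<le> R0 \<alpha> \<beta> \<rho>"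
    using RC_less_one assms(2) by linarith
  have b: "b < 0"
    using linear_coefficient_neg[OF assms(1) RC_le] by (simp add: b_def)
  have "\<gamma> * (\<alpha> / \<beta> - \<rho>) \<le> 0"
    using assms pos by (simp add: R0_def field_simps mult_le_0_iff)
  then have "b\<^sup>2 \<le> d"
    using assms(1) pos kappa_gt_one[of \<alpha> \<eta>]
    by (simp add: d_def disc_def b_def mult_nonneg_nonpos)
  then have d: "d \<ge> 0" and "- b \<le> sqrt d"
    using b real_sqrt_le_mono[of "b\<^sup>2" d] by (auto intro: order_trans[OF zero_le_power2])
  then have "\<not> I_minus \<alpha> \<beta> \<gamma> \<eta> \<rho> > 0" "I_plus \<alpha> \<beta> \<gamma> \<eta> \<rho> > 0"
    using den b by (auto simp: I_minus_def I_plus_def d_def[symmetric] b_def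
        divide_less_0_iff not_less divide_nonpos_pos intro!: divide_pos_pos)
  then show ?thesis
    using d pos assms(1) by (auto simp: endemic_equilibria_eq E_plus_def d_def)
qed

text \<open>The coefficient of the infective deviation in the per-capita infection rate at an
  endemic equilibrium, divided by \<open>\<beta>\<close>; its positivity is what makes \<open>\<E>\<^sub>-\<close> unstable.\<close>
lemma infection_rate_slope_pos: "- (1 - \<rho>) * ((\<alpha> - \<gamma> - \<alpha> / \<rho>) / \<gamma>) - \<rho> * (\<alpha> / \<eta>) - 1 > 0"
proof -
  define q where "q = sqrt (\<alpha> * \<gamma> * kappa \<alpha> \<eta>)"
  have q2: "q\<^sup>2 = \<alpha> * \<gamma> * kappa \<alpha> \<eta>"
    using pos kappa_sqrt_squared[of \<alpha> \<gamma> \<eta>] by (simp add: q_def)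
  have "\<rho> * \<gamma> * (- (1 - \<rho>) * ((\<alpha> - \<gamma> - \<alpha> / \<rho>) / \<gamma>) - \<rho> * (\<alpha> / \<eta>) - 1)
      = (1 - \<rho>)\<^sup>2 * \<alpha> - \<rho>\<^sup>2 * \<gamma> * kappa \<alpha> \<eta>"
    using pos by (simp add: kappa_def field_simps power2_eq_square)
  also have "\<dots> = ((1 - \<rho>) * \<alpha> - \<rho> * q) * ((1 - \<rho>) * \<alpha> + \<rho> * q) / \<alpha>"
    using q2 pos by (simp add: field_simps power2_eq_square)
  also have "\<dots> > 0"
  proof -
    have "(1 - \<rho>) * \<alpha> - \<rho> * q > 0" "q \<ge> 0"
      using rho_star_margin pos kappa_gt_one[of \<alpha> \<eta>] by (simp_all add: q_def algebra_simps)
    then show ?thesis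
      using pos by (intro divide_pos_pos mult_pos_pos add_pos_nonneg) auto
  qed
  finally have "0 < (\<rho> * \<gamma>) * (- (1 - \<rho>) * ((\<alpha> - \<gamma> - \<alpha> / \<rho>) / \<gamma>) - \<rho> * (\<alpha> / \<eta>) - 1)" .
  moreover have "0 < \<rho> * \<gamma>"
    using pos by simp
  ultimately show ?thesis
    by (rule zero_less_mult_pos)
qed

lemma E_minus_at_threshold: "E_minus \<alpha> (\<alpha> / \<rho>) \<gamma> \<eta> \<rho> = (1, 0, 0)"
proof -
  define b where "b = \<alpha> * (2 - \<rho>) + \<rho> * \<gamma> * kappa \<alpha> \<eta> - \<alpha> / \<rho>"
  have "\<alpha> / \<rho> > 0"
    using pos by simp
  moreover have "RC \<alpha> \<gamma> \<eta> \<rho> \<le> R0 \<alpha> (\<alpha> / \<rho>) \<rho>"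
    using RC_less_one pos by (simp add: R0_def)
  ultimately have "b < 0"
    unfolding b_def by (rule linear_coefficient_neg)
  moreover have "disc \<alpha> (\<alpha> / \<rho>) \<gamma> \<eta> \<rho> = b\<^sup>2"
    using pos by (simp add: disc_def b_def)
  ultimately have "I_minus \<alpha> (\<alpha> / \<rho>) \<gamma> \<eta> \<rho> = 0"
    by (simp add: I_minus_def b_def)
  then show ?thesis
    using pos by (simp add: E_minus_def eq_point_def)
qed

lemma isCont_E_minus_at_threshold: "isCont (\<lambda>b. E_minus \<alpha> b \<gamma> \<eta> \<rho>) (\<alpha> / \<rho>)"
proof -
  have "isCont (\<lambda>b. I_minus \<alpha> b \<gamma> \<eta> \<rho>) (\<alpha> / \<rho>)"
    unfolding I_minus_def disc_def using pos kappa_gt_one[of \<alpha> \<eta>]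
    by (auto intro!: continuous_intros)
  moreover have "I_minus \<alpha> (\<alpha> / \<rho>) \<gamma> \<eta> \<rho> = 0"
    using E_minus_at_threshold by (simp add: E_minus_def eq_point_def)
  ultimately show ?thesis
    unfolding E_minus_def eq_point_def using pos
    by (auto intro!: continuous_intros)
qed

lemma endemic_chetaev_margin_at_threshold:
  "endemic_chetaev_margin \<alpha> (\<alpha> / \<rho>) \<gamma> \<eta> \<rho> 1 0 > 0"
proof -
  define \<sigma> where "\<sigma> = - (1 - \<rho>) * (\<alpha> / \<rho>) * ((\<alpha> - \<gamma> - \<alpha> / \<rho>) / \<gamma>)
      - \<rho> * (\<alpha> / \<rho>) * (\<alpha> / \<eta>) - \<alpha> / \<rho>"
  have "\<sigma> = \<alpha> / \<rho> * (- (1 - \<rho>) * ((\<alpha> - \<gamma> - \<alpha> / \<rho>) / \<gamma>) - \<rho> * (\<alpha> / \<eta>) - 1)"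
    unfolding \<sigma>_def using pos by (simp add: field_simps)
  then have "\<sigma> > 0"
    using infection_rate_slope_pos pos by simp
  moreover have "min (\<gamma> / (2 * ((1 - \<rho>) * (\<alpha> / \<rho>))\<^sup>2)) (\<eta> / (2 * (\<rho> * (\<alpha> / \<rho>))\<^sup>2)) > 0"
    using pos by simp
  ultimately show ?thesis
    unfolding endemic_chetaev_margin_def Let_def \<sigma>_def[symmetric] using pos by simp
qed

lemma eventually_below_threshold:
  "\<forall>\<^sub>F b in at_left (\<alpha> / \<rho>).
     endemic_chetaev_margin \<alpha> b \<gamma> \<eta> \<rho> (fst (E_minus \<alpha> b \<gamma> \<eta> \<rho>)) (fst (snd (E_minus \<alpha> b \<gamma> \<eta> \<rho>))) > 0
     \<and> \<alpha> * RC \<alpha> \<gamma> \<eta> \<rho> / \<rho> < b \<and> 0 < b"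
proof -
  define \<Phi> where "\<Phi> b = endemic_chetaev_margin \<alpha> b \<gamma> \<eta> \<rho> (fst (E_minus \<alpha> b \<gamma> \<eta> \<rho>))
      (fst (snd (E_minus \<alpha> b \<gamma> \<eta> \<rho>)))" for b
  have "isCont \<Phi> (\<alpha> / \<rho>)"
    unfolding \<Phi>_def endemic_chetaev_margin_def Let_def using pos
    by (auto intro!: continuous_intros isCont_E_minus_at_threshold)
  moreover have "\<Phi> (\<alpha> / \<rho>) > 0"
    using endemic_chetaev_margin_at_threshold E_minus_at_threshold by (simp add: \<Phi>_def)
  ultimately have "\<forall>\<^sub>F b in at (\<alpha> / \<rho>). \<Phi> b > 0"
    by (auto simp: isCont_def dest: order_tendstoD(1))
  then have "\<forall>\<^sub>F b in at_left (\<alpha> / \<rho>). \<Phi> b > 0"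
    by (simp add: eventually_at_split)
  moreover have "max 0 (\<alpha> * RC \<alpha> \<gamma> \<eta> \<rho> / \<rho>) < \<alpha> / \<rho>"
    using RC_less_one pos by (simp add: divide_strict_right_mono)
  then have "\<forall>\<^sub>F b in at_left (\<alpha> / \<rho>). b \<in> {max 0 (\<alpha> * RC \<alpha> \<gamma> \<eta> \<rho> / \<rho>) <..< \<alpha> / \<rho>}"
    by (rule eventually_at_left_real)
  ultimately show ?thesis
    unfolding \<Phi>_def by eventually_elim auto
qed

text \<open>All conditions of the bifurcation statement are open conditions on \<open>\<beta>\<close> that hold at or
  just below \<open>\<beta> = \<alpha> / \<rho>\<close>, where \<open>\<E>\<^sub>-\<close> merges with \<open>\<E>\<^sub>0\<close>.\<close>
lemma backward_bifurcation:
  "\<exists>\<delta>>0.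
     (\<forall>b. \<alpha> / \<rho> - \<delta> < b \<and> b < \<alpha> / \<rho> \<longrightarrow>
        loc_asympt_stable (sir_field \<alpha> b \<gamma> \<eta> \<rho>) (1, 0, 0)
        \<and> endemic_equilibrium \<alpha> b \<gamma> \<eta> \<rho> (E_minus \<alpha> b \<gamma> \<eta> \<rho>)
        \<and> unstable (sir_field \<alpha> b \<gamma> \<eta> \<rho>) (E_minus \<alpha> b \<gamma> \<eta> \<rho>))
     \<and> (\<forall>b. \<alpha> / \<rho> < b \<and> b < \<alpha> / \<rho> + \<delta> \<longrightarrow> unstable (sir_field \<alpha> b \<gamma> \<eta> \<rho>) (1, 0, 0))
     \<and> ((\<lambda>b. E_minus \<alpha> b \<gamma> \<eta> \<rho>) \<longlongrightarrow> (1, 0, 0)) (at_left (\<alpha> / \<rho>))"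
proof -
  obtain bl where "bl < \<alpha> / \<rho>" and below: "\<And>b. bl < b \<Longrightarrow> b < \<alpha> / \<rho> \<Longrightarrow>
      endemic_chetaev_margin \<alpha> b \<gamma> \<eta> \<rho> (fst (E_minus \<alpha> b \<gamma> \<eta> \<rho>)) (fst (snd (E_minus \<alpha> b \<gamma> \<eta> \<rho>))) > 0
      \<and> \<alpha> * RC \<alpha> \<gamma> \<eta> \<rho> / \<rho> < b \<and> 0 < b"
    using eventually_below_threshold unfolding eventually_at_left_field by blast
  show ?thesis
  proof (intro exI[of _ "\<alpha> / \<rho> - bl"] conjI allI impI)
    show "\<alpha> / \<rho> - bl > 0"
      using \<open>bl < \<alpha> / \<rho>\<close> by simp
  next
    fix b assume b: "\<alpha> / \<rho> - (\<alpha> / \<rho> - bl) < b \<and> b < \<alpha> / \<rho>"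
    with below have margin: "endemic_chetaev_margin \<alpha> b \<gamma> \<eta> \<rho> (fst (E_minus \<alpha> b \<gamma> \<eta> \<rho>))
        (fst (snd (E_minus \<alpha> b \<gamma> \<eta> \<rho>))) > 0"
      and above_critical: "\<alpha> * RC \<alpha> \<gamma> \<eta> \<rho> / \<rho> < b" and b_pos: "b > 0"
      by auto
    have subthreshold: "\<rho> * b < \<alpha>"
      using b pos by (simp add: pos_less_divide_eq mult.commute)
    then show "loc_asympt_stable (sir_field \<alpha> b \<gamma> \<eta> \<rho>) (1, 0, 0)"
      using dfe_loc_asympt_stable pos b_pos by blast
    have "RC \<alpha> \<gamma> \<eta> \<rho> \<le> R0 \<alpha> b \<rho>" "R0 \<alpha> b \<rho> < 1"
      using R0_ge_RC_iff(1)[OF b_pos] above_critical subthreshold pos by (auto simp: R0_def)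
    then show endemic: "endemic_equilibrium \<alpha> b \<gamma> \<eta> \<rho> (E_minus \<alpha> b \<gamma> \<eta> \<rho>)"
      using two_endemic_equilibria(1)[OF b_pos] by blast
    obtain Ss Is Rs where E: "E_minus \<alpha> b \<gamma> \<eta> \<rho> = (Ss, Is, Rs)"
      by (metis prod_cases3)
    show "unstable (sir_field \<alpha> b \<gamma> \<eta> \<rho>) (E_minus \<alpha> b \<gamma> \<eta> \<rho>)"
      using endemic_equilibrium_unstable[of \<alpha> b \<gamma> \<eta> \<rho> Ss Is Rs] endemic margin pos b_pos
        infection_rate_slope_pos by (simp add: E)
  next
    fix b assume "\<alpha> / \<rho> < b \<and> b < \<alpha> / \<rho> + (\<alpha> / \<rho> - bl)"
    then have "\<rho> * b > \<alpha>"
      using pos by (simp add: field_simps)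
    moreover from this have "b > 0"
      using pos zero_less_mult_pos[of \<rho> b] by linarith
    ultimately show "unstable (sir_field \<alpha> b \<gamma> \<eta> \<rho>) (1, 0, 0)"
      using dfe_unstable pos by blast
  next
    show "((\<lambda>b. E_minus \<alpha> b \<gamma> \<eta> \<rho>) \<longlongrightarrow> (1, 0, 0)) (at_left (\<alpha> / \<rho>))"
      using isCont_E_minus_at_threshold E_minus_at_threshold
      by (simp add: isCont_def filterlim_at_split)
  qed
qed

end

theorem theorem4:
  fixes \<alpha> \<beta> \<gamma> \<eta> \<rho> :: real
  assumes "\<alpha> > 0" "\<beta> > 0" "\<gamma> > 0" "\<eta> > 0"
    and "0 < \<rho>" "\<rho> < 1" "\<gamma> \<ge> \<alpha>"
    and "\<rho> < rho_star \<alpha> \<gamma> \<eta>"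
  shows
    "(R0 \<alpha> \<beta> \<rho> < RC \<alpha> \<gamma> \<eta> \<rho> \<longrightarrow>
        {x. endemic_equilibrium \<alpha> \<beta> \<gamma> \<eta> \<rho> x} = {})
     \<and> (RC \<alpha> \<gamma> \<eta> \<rho> \<le> R0 \<alpha> \<beta> \<rho> \<and> R0 \<alpha> \<beta> \<rho> < 1 \<longrightarrow>
        {x. endemic_equilibrium \<alpha> \<beta> \<gamma> \<eta> \<rho> x}
          = {E_plus \<alpha> \<beta> \<gamma> \<eta> \<rho>, E_minus \<alpha> \<beta> \<gamma> \<eta> \<rho>}
        \<and> (E_plus \<alpha> \<beta> \<gamma> \<eta> \<rho> = E_minus \<alpha> \<beta> \<gamma> \<eta> \<rho>
             \<longleftrightarrow> RC \<alpha> \<gamma> \<eta> \<rho> = R0 \<alpha> \<beta> \<rho>))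
     \<and> (1 \<le> R0 \<alpha> \<beta> \<rho> \<longrightarrow>
        {x. endemic_equilibrium \<alpha> \<beta> \<gamma> \<eta> \<rho> x} = {E_plus \<alpha> \<beta> \<gamma> \<eta> \<rho>})
     \<and> (\<exists>\<delta>>0.
          (\<forall>b. \<alpha> / \<rho> - \<delta> < b \<and> b < \<alpha> / \<rho> \<longrightarrow>
              loc_asympt_stable (sir_field \<alpha> b \<gamma> \<eta> \<rho>) (1, 0, 0)
              \<and> endemic_equilibrium \<alpha> b \<gamma> \<eta> \<rho> (E_minus \<alpha> b \<gamma> \<eta> \<rho>)
              \<and> unstable (sir_field \<alpha> b \<gamma> \<eta> \<rho>) (E_minus \<alpha> b \<gamma> \<eta> \<rho>))
          \<and> (\<forall>b. \<alpha> / \<rho> < b \<and> b < \<alpha> / \<rho> + \<delta> \<longrightarrow>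
              unstable (sir_field \<alpha> b \<gamma> \<eta> \<rho>) (1, 0, 0))
          \<and> ((\<lambda>b. E_minus \<alpha> b \<gamma> \<eta> \<rho>) \<longlongrightarrow> (1, 0, 0)) (at_left (\<alpha> / \<rho>)))"
proof (intro conjI impI)
  note hyps = assms(1,3-8)
  show "{x. endemic_equilibrium \<alpha> \<beta> \<gamma> \<eta> \<rho> x} = {}" if "R0 \<alpha> \<beta> \<rho> < RC \<alpha> \<gamma> \<eta> \<rho>"
    using no_endemic_equilibrium[OF hyps assms(2) that] .
  show "{x. endemic_equilibrium \<alpha> \<beta> \<gamma> \<eta> \<rho> x} = {E_plus \<alpha> \<beta> \<gamma> \<eta> \<rho>, E_minus \<alpha> \<beta> \<gamma> \<eta> \<rho>}"
    and "E_plus \<alpha> \<beta> \<gamma> \<eta> \<rho> = E_minus \<alpha> \<beta> \<gamma> \<eta> \<rho> \<longleftrightarrow> RC \<alpha> \<gamma> \<eta> \<rho> = R0 \<alpha> \<beta> \<rho>"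
    if "RC \<alpha> \<gamma> \<eta> \<rho> \<le> R0 \<alpha> \<beta> \<rho> \<and> R0 \<alpha> \<beta> \<rho> < 1"
    using two_endemic_equilibria[OF hyps assms(2)] that by simp_all
  show "{x. endemic_equilibrium \<alpha> \<beta> \<gamma> \<eta> \<rho> x} = {E_plus \<alpha> \<beta> \<gamma> \<eta> \<rho>}" if "1 \<le> R0 \<alpha> \<beta> \<rho>"
    using unique_endemic_equilibrium[OF hyps assms(2) that] .
qed (rule backward_bifurcation[OF assms(1,3-8)])

end
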